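(* Let $\Phi=(V,C)$ be a $k$-uniform CNF formula with $n=|V|$ variables such that each variable belongs to at most $d$ clauses, and let $\mu$ be the uniform distribution over its satisfying assignments. Let $k_\alpha,k_\beta\ge1$ be integers with $k_\alpha+k_\beta\le k$, and let $\mathcal{M}\subseteq V$ be such that every clause contains at least $k_\alpha$ variables of $\mathcal{M}$ and at least $k_\beta$ variables of $V\setminus\mathcal{M}$. Let $P_{\mathsf{Glauber}}$ be the Glauber dynamics on $\{0,1\}^{\mathcal{M}}$: from state $X$, pick $v\in\mathcal{M}$ uniformly at random, keep $X(u)$ for all $u\in\mathcal{M}\setminus\{v\}$, and resample $X(v)$ from $\mu_v(\cdot\mid X(\mathcal{M}\setminus\{v\}))$. If $2^{k_\beta}\ge 2^{16}d^9k^9$, then for every $\delta>0$, $$T_{\mathsf{mix}}(P_{\mathsf{Glauber}},\delta)\le\left\lceil 2n\log\frac{n}{\delta}\right\rceil.$$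
   Context: A CNF formula is $k$-uniform if every clause contains exactly $k$ literals on distinct variables (never both $x$ and $\neg x$). For $S\subseteq V$, $\mu_S$ is the marginal of $\mu$ on $S$, and $\mu_S(\cdot\mid \sigma)$ denotes this marginal conditioned on a partial assignment $\sigma$ of variables outside $S$; $\mu_v=\mu_{\{v\}}$. The stationary distribution of $P_{\mathsf{Glauber}}$ is the marginal $\mu_{\mathcal{M}}$. The mixing time is $T_{\mathsf{mix}}(P,\delta)=\max_{X_0}\min\{t: d_{TV}(P^t(X_0,\cdot),\mu_{\mathcal{M}})\le\delta\}$, where $d_{TV}$ is total variation distance. $\log=\log_2$. *)

theory Defs
  imports "HOL-Library.FuncSet" Complex_Main
begin

text \<open>A literal is a pair (v, b): it is satisfied by an assignment sigma iff sigma v = b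
  (b = True: positive literal x, b = False: negative literal not x).\<close>

type_synonym 'v clause = "('v \<times> bool) set"

definition cnf_formula :: "'v set \<Rightarrow> 'v clause set \<Rightarrow> bool" where
  "cnf_formula V C \<longleftrightarrow> finite V \<and> finite C \<and> (\<forall>c\<in>C. finite c \<and> fst ` c \<subseteq> V)"

definition k_uniform :: "nat \<Rightarrow> 'v clause set \<Rightarrow> bool" where
  "k_uniform k C \<longleftrightarrow> (\<forall>c\<in>C. card c = k \<and> card (fst ` c) = k)"

definition clause_vars :: "'v clause \<Rightarrow> 'v set" where
  "clause_vars c = fst ` c"

definition max_degree_le :: "'v set \<Rightarrow> 'v clause set \<Rightarrow> nat \<Rightarrow> bool" where
  "max_degree_le V C d \<longleftrightarrow> (\<forall>v\<in>V. card {c\<in>C. v \<in> clause_vars c} \<le> d)"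

definition satisfies :: "('v \<Rightarrow> bool) \<Rightarrow> 'v clause set \<Rightarrow> bool" where
  "satisfies \<sigma> C \<longleftrightarrow> (\<forall>c\<in>C. \<exists>(v, b)\<in>c. \<sigma> v = b)"

definition sat_assignments :: "'v set \<Rightarrow> 'v clause set \<Rightarrow> ('v \<Rightarrow> bool) set" where
  "sat_assignments V C = {\<sigma> \<in> V \<rightarrow>\<^sub>E (UNIV :: bool set). satisfies \<sigma> C}"

definition marginal :: "'v set \<Rightarrow> 'v clause set \<Rightarrow> 'v set \<Rightarrow> ('v \<Rightarrow> bool) \<Rightarrow> real" where
  "marginal V C S \<tau> =
     real (card {\<omega> \<in> sat_assignments V C. restrict \<omega> S = \<tau>})
     / real (card (sat_assignments V C))"

text \<open>Conditional marginal mu_S(tau | sigma), sigma a partial assignment on W (W disjoint from S).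
  (Division by zero yields 0 by Isabelle convention; irrelevant when the condition has positive
  probability.)\<close>
definition cond_marginal ::
  "'v set \<Rightarrow> 'v clause set \<Rightarrow> 'v set \<Rightarrow> ('v \<Rightarrow> bool) \<Rightarrow> 'v set \<Rightarrow> ('v \<Rightarrow> bool) \<Rightarrow> real" where
  "cond_marginal V C S \<tau> W \<sigma> =
     real (card {\<omega> \<in> sat_assignments V C. restrict \<omega> S = \<tau> \<and> restrict \<omega> W = \<sigma>})
     / real (card {\<omega> \<in> sat_assignments V C. restrict \<omega> W = \<sigma>})"

definition glauber :: "'v set \<Rightarrow> 'v clause set \<Rightarrow> 'v set \<Rightarrow> ('v \<Rightarrow> bool) \<Rightarrow> ('v \<Rightarrow> bool) \<Rightarrow> real" where
  "glauber V C M X Y =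
     (if X \<in> M \<rightarrow>\<^sub>E (UNIV :: bool set) \<and> Y \<in> M \<rightarrow>\<^sub>E (UNIV :: bool set) then
        (1 / real (card M)) *
        (\<Sum>v\<in>M. if restrict Y (M - {v}) = restrict X (M - {v})
                 then cond_marginal V C {v} (restrict Y {v}) (M - {v}) (restrict X (M - {v}))
                 else 0)
      else 0)"

fun kernel_pow :: "'s set \<Rightarrow> ('s \<Rightarrow> 's \<Rightarrow> real) \<Rightarrow> nat \<Rightarrow> 's \<Rightarrow> 's \<Rightarrow> real" where
  "kernel_pow S P 0 x y = (if x = y then 1 else 0)"
| "kernel_pow S P (Suc t) x y = (\<Sum>z\<in>S. kernel_pow S P t x z * P z y)"

definition dtv :: "'s set \<Rightarrow> ('s \<Rightarrow> real) \<Rightarrow> ('s \<Rightarrow> real) \<Rightarrow> real" where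
  "dtv S p q = (1/2) * (\<Sum>y\<in>S. \<bar>p y - q y\<bar>)"

definition mixing_time :: "'s set \<Rightarrow> ('s \<Rightarrow> 's \<Rightarrow> real) \<Rightarrow> ('s \<Rightarrow> real) \<Rightarrow> real \<Rightarrow> nat" where
  "mixing_time S P \<pi> \<delta> = Max ((\<lambda>x0. LEAST t. dtv S (kernel_pow S P t x0) \<pi> \<le> \<delta>) ` S)"

end

(* One step of the Glauber dynamics on {0,1}^M contracts the Lipschitz constant (with respect
   to single flips) of every function by the factor 1 - 1/(2|M|); hence after t steps the
   expectation of a [0,1]-valued function is within |M| (1 - 1/(2|M|))^t of its stationary
   value, which bounds the total variation distance to the marginal of mu on M.

   The contraction amounts to bounding the total influence of a flip at j,
   sum over v of |mu_v(. | X) - mu_v(. | X with j flipped)|, by 1/3. Coupling the two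
   conditional distributions by swapping the disagreement component of j (variables linked
   through clauses that have no literal true in both assignments), the influence on v is at
   most the probability that this component reaches v. That event is covered by induced
   paths of clauses from j to v, every second clause of which contributes at least k_beta
   unmarked variables on which the pair avoids a fixed pattern. A counting form of the local
   lemma on the unmarked variables bounds each such conditional probability by
   3 theta^2 per variable, with theta close to 1/2, and the condition
   2^k_beta >= 2^16 d^9 k^9 makes the sum over all induced paths a geometric series. *)

theory Submission
  imports Defs
begin

section \<open>Counting on the Boolean cube\<close>

definition cube :: "'a set \<Rightarrow> ('a \<Rightarrow> bool) set" where
  "cube W = W \<rightarrow>\<^sub>E (UNIV :: bool set)"

definition cube_count :: "'a set \<Rightarrow> (('a \<Rightarrow> bool) \<Rightarrow> bool) \<Rightarrow> nat" where
  "cube_count W P = card {\<tau> \<in> cube W. P \<tau>}"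

definition depends_only :: "'a set \<Rightarrow> 'a set \<Rightarrow> (('a \<Rightarrow> bool) \<Rightarrow> bool) \<Rightarrow> bool" where
  "depends_only W T P \<longleftrightarrow>
     (\<forall>\<tau>\<in>cube W. \<forall>\<tau>'\<in>cube W. (\<forall>u\<in>T. \<tau> u = \<tau>' u) \<longrightarrow> P \<tau> = P \<tau>')"

definition merge :: "'a set \<Rightarrow> ('a \<Rightarrow> bool) \<Rightarrow> ('a \<Rightarrow> bool) \<Rightarrow> 'a \<Rightarrow> bool" where
  "merge T x y = (\<lambda>u. if u \<in> T then x u else y u)"

lemma finite_cube: "finite W \<Longrightarrow> finite (cube W)"
  unfolding cube_def by (simp add: finite_PiE)

lemma card_cube: "finite W \<Longrightarrow> card (cube W) = 2 ^ card W"
  unfolding cube_def by (simp add: card_PiE)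

lemma cube_nonempty: "cube W \<noteq> {}"
  unfolding cube_def by (simp add: PiE_eq_empty_iff)

lemma fun_upd_in_cube: "X \<in> cube M \<Longrightarrow> v \<in> M \<Longrightarrow> X(v := b) \<in> cube M"
  unfolding cube_def by (auto simp: PiE_def extensional_def)

lemma merge_in_cube: "T \<subseteq> W \<Longrightarrow> x \<in> cube W \<Longrightarrow> y \<in> cube W \<Longrightarrow> merge T x y \<in> cube W"
  unfolding cube_def merge_def by (auto simp: PiE_def extensional_def)

lemma merge_swap_merge: "merge T (merge T x y) (merge T y x) = x"
  unfolding merge_def by (simp add: fun_eq_iff)

lemma cube_count_mono:
  "finite W \<Longrightarrow> (\<And>\<tau>. \<tau> \<in> cube W \<Longrightarrow> P \<tau> \<Longrightarrow> P' \<tau>) \<Longrightarrow> cube_count W P \<le> cube_count W P'"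
  unfolding cube_count_def by (rule card_mono) (auto simp: finite_cube)

text \<open>Swapping the coordinates in \<open>T\<close> between two points is a bijection from pairs of an
  \<open>A\<close>-point and a \<open>G\<close>-point to pairs of an \<open>A \<and> G\<close>-point and an arbitrary point.\<close>

lemma cube_count_conj_indep:
  assumes T: "T \<subseteq> W" and A: "depends_only W T A" and G: "depends_only W (W - T) G"
  shows "cube_count W (\<lambda>\<tau>. A \<tau> \<and> G \<tau>) * card (cube W) = cube_count W A * cube_count W G"
proof -
  let ?f = "\<lambda>(x, y). (merge T x y, merge T y x)"
  let ?S1 = "{\<tau> \<in> cube W. A \<tau>} \<times> {\<tau> \<in> cube W. G \<tau>}"
  let ?S2 = "{\<tau> \<in> cube W. A \<tau> \<and> G \<tau>} \<times> cube W"
  have in_cube: "merge T x y \<in> cube W" if "x \<in> cube W" "y \<in> cube W" for x y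
    using merge_in_cube[OF T that] .
  have A_merge: "A (merge T x y) = A x" if "x \<in> cube W" "y \<in> cube W" for x y
    by (rule A[unfolded depends_only_def, rule_format, OF in_cube[OF that] that(1)])
      (simp add: merge_def)
  have G_merge: "G (merge T x y) = G y" if "x \<in> cube W" "y \<in> cube W" for x y
    by (rule G[unfolded depends_only_def, rule_format, OF in_cube[OF that] that(2)])
      (simp add: merge_def)
  have "bij_betw ?f ?S1 ?S2"
    by (rule bij_betw_byWitness[where f' = ?f])
      (auto simp: merge_swap_merge in_cube A_merge G_merge)
  hence "card ?S1 = card ?S2" by (rule bij_betw_same_card)
  thus ?thesis unfolding cube_count_def by (simp add: card_cartesian_product)
qed

lemma cube_count_restrict_eq:
  assumes W: "finite W" and Q: "Q \<subseteq> W" and a: "a \<in> Q \<rightarrow>\<^sub>E (UNIV :: bool set)"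
  shows "cube_count W (\<lambda>\<tau>. restrict \<tau> Q = a) * 2 ^ card Q = 2 ^ card W"
proof -
  let ?S = "{\<tau> \<in> cube W. restrict \<tau> Q = a}"
  have "bij_betw (\<lambda>\<tau>. restrict \<tau> (W - Q)) ?S (cube (W - Q))"
    by (rule bij_betw_byWitness[where f' = "merge Q a"])
      (use Q a in \<open>auto simp: cube_def merge_def fun_eq_iff PiE_def extensional_def restrict_def\<close>)
  hence "card ?S = 2 ^ card (W - Q)"
    using W by (simp add: bij_betw_same_card card_cube)
  moreover have "card Q \<le> card W" "card (W - Q) = card W - card Q"
    using W Q by (auto simp: card_mono card_Diff_subset finite_subset)
  ultimately show ?thesis
    unfolding cube_count_def by (simp add: power_add[symmetric])
qed

section \<open>A counting form of the local lemma\<close>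

definition avoids :: "('c \<Rightarrow> ('a \<Rightarrow> bool) \<Rightarrow> bool) \<Rightarrow> 'c set \<Rightarrow> ('a \<Rightarrow> bool) \<Rightarrow> bool" where
  "avoids B S \<tau> \<longleftrightarrow> (\<forall>c\<in>S. \<not> B c \<tau>)"

lemma avoids_count_le_split:
  assumes W: "finite W" and S: "finite S" and S': "S' \<subseteq> S"
  shows "cube_count W (avoids B S')
    \<le> cube_count W (avoids B S) + (\<Sum>c\<in>S - S'. cube_count W (\<lambda>\<tau>. B c \<tau> \<and> avoids B S' \<tau>))"
proof -
  let ?U = "\<Union>c\<in>S - S'. {\<tau> \<in> cube W. B c \<tau> \<and> avoids B S' \<tau>}"
  have "{\<tau> \<in> cube W. avoids B S' \<tau>} \<subseteq> {\<tau> \<in> cube W. avoids B S \<tau>} \<union> ?U"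
    using S' unfolding avoids_def by blast
  hence "cube_count W (avoids B S') \<le> card ({\<tau> \<in> cube W. avoids B S \<tau>} \<union> ?U)"
    unfolding cube_count_def using W S by (intro card_mono) (auto simp: finite_cube)
  also have "\<dots> \<le> cube_count W (avoids B S) + card ?U"
    unfolding cube_count_def by (rule card_Un_le)
  also have "\<dots> \<le> cube_count W (avoids B S) + (\<Sum>c\<in>S - S'. cube_count W (\<lambda>\<tau>. B c \<tau> \<and> avoids B S' \<tau>))"
    unfolding cube_count_def using S by (intro add_left_mono card_UN_le) simp
  finally show ?thesis .
qed

locale symmetric_lll =
  fixes W :: "'a set" and Cs :: "'c set" and B :: "'c \<Rightarrow> ('a \<Rightarrow> bool) \<Rightarrow> bool"
    and R :: "'c \<Rightarrow> 'a set" and p :: real and \<Delta> :: nat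
  assumes finite_W: "finite W" and finite_Cs: "finite Cs"
    and scope_subset: "\<And>c. c \<in> Cs \<Longrightarrow> R c \<subseteq> W"
    and bad_depends: "\<And>c. c \<in> Cs \<Longrightarrow> depends_only W (R c) (B c)"
    and bad_count: "\<And>c. c \<in> Cs \<Longrightarrow> real (cube_count W (B c)) \<le> p * card (cube W)"
    and scope_overlaps: "\<And>c. c \<in> Cs \<Longrightarrow> card {c'\<in>Cs. R c' \<inter> R c \<noteq> {}} \<le> \<Delta>"
    and p_nonneg: "0 \<le> p" and four_p_le: "4 * p \<le> 1" and four_p_\<Delta>_le: "4 * p * \<Delta> \<le> 1"
begin

lemma depends_only_avoids:
  assumes S: "S \<subseteq> Cs" and T: "\<And>c. c \<in> S \<Longrightarrow> R c \<subseteq> T"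
  shows "depends_only W T (avoids B S)"
  unfolding depends_only_def avoids_def
proof (intro ballI impI)
  fix \<tau> \<tau>' assume \<tau>: "\<tau> \<in> cube W" "\<tau>' \<in> cube W" and eq: "\<forall>u\<in>T. \<tau> u = \<tau>' u"
  have "B c \<tau> = B c \<tau>'" if "c \<in> S" for c
    using bad_depends[of c] S T[OF that] that \<tau> eq unfolding depends_only_def by blast
  thus "(\<forall>c\<in>S. \<not> B c \<tau>) = (\<forall>c\<in>S. \<not> B c \<tau>')" by blast
qed

lemma bad_avoids_disjoint_le:
  assumes c: "c \<in> Cs" and S: "S \<subseteq> Cs" and disj: "\<And>c'. c' \<in> S \<Longrightarrow> R c' \<inter> R c = {}"
  shows "real (cube_count W (\<lambda>\<tau>. B c \<tau> \<and> avoids B S \<tau>)) \<le> p * cube_count W (avoids B S)"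
proof -
  have "depends_only W (W - R c) (avoids B S)"
    using S disj scope_subset by (intro depends_only_avoids) blast+
  hence "cube_count W (\<lambda>\<tau>. B c \<tau> \<and> avoids B S \<tau>) * card (cube W)
      = cube_count W (B c) * cube_count W (avoids B S)"
    by (rule cube_count_conj_indep[OF scope_subset[OF c] bad_depends[OF c]])
  hence "real (cube_count W (\<lambda>\<tau>. B c \<tau> \<and> avoids B S \<tau>)) * card (cube W)
      = real (cube_count W (B c)) * cube_count W (avoids B S)"
    by (metis of_nat_mult)
  also have "\<dots> \<le> p * card (cube W) * cube_count W (avoids B S)"
    using bad_count[OF c] by (rule mult_right_mono) simp
  finally have "real (card (cube W)) * cube_count W (\<lambda>\<tau>. B c \<tau> \<and> avoids B S \<tau>)
      \<le> real (card (cube W)) * (p * cube_count W (avoids B S))"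
    by (simp add: algebra_simps)
  moreover have "0 < card (cube W)" using finite_W by (simp add: card_cube)
  ultimately show ?thesis by (simp add: mult_left_le_imp_le)
qed

text \<open>Drop the events of \<open>S\<close> whose scope meets that of \<open>c\<close>: conditioning on the others does
  not change the probability of \<open>B c\<close>, and by induction dropping these at most \<open>\<Delta>\<close> events at
  most doubles the count.\<close>

lemma bad_given_avoids_le:
  "S \<subseteq> Cs \<Longrightarrow> c \<in> Cs - S \<Longrightarrow>
    real (cube_count W (\<lambda>\<tau>. B c \<tau> \<and> avoids B S \<tau>)) \<le> 2 * p * cube_count W (avoids B S)"
proof (induction "card S" arbitrary: S c rule: less_induct)
  case less
  note S = less.prems(1) and c = less.prems(2)
  have finS: "finite S" using S finite_Cs finite_subset by blast
  define S1 where "S1 = {c'\<in>S. R c' \<inter> R c \<noteq> {}}"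
  define S2 where "S2 = S - S1"
  have far: "real (cube_count W (\<lambda>\<tau>. B c \<tau> \<and> avoids B S2 \<tau>)) \<le> p * cube_count W (avoids B S2)"
    using c S by (intro bad_avoids_disjoint_le) (auto simp: S1_def S2_def)
  have IH: "real (cube_count W (\<lambda>\<tau>. B c' \<tau> \<and> avoids B S2 \<tau>)) \<le> 2 * p * cube_count W (avoids B S2)"
    if "c' \<in> S1" for c'
  proof (rule less.hyps)
    show "card S2 < card S"
      using that finS unfolding S2_def S1_def by (intro psubset_card_mono) auto
  qed (use S that in \<open>auto simp: S1_def S2_def\<close>)
  have "S1 \<subseteq> {c'\<in>Cs. R c' \<inter> R c \<noteq> {}}" using S by (auto simp: S1_def)
  hence "card S1 \<le> card {c'\<in>Cs. R c' \<inter> R c \<noteq> {}}" using finite_Cs by (intro card_mono) auto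
  also have "\<dots> \<le> \<Delta>" using c by (intro scope_overlaps) simp
  finally have "real (card S1) * (2 * p) \<le> real \<Delta> * (2 * p)"
    using p_nonneg by (intro mult_right_mono) auto
  moreover have "real \<Delta> * (2 * p) = (4 * p * real \<Delta>) / 2" by simp
  ultimately have small: "real (card S1) * (2 * p) \<le> 1 / 2" using four_p_\<Delta>_le by linarith
  have S2: "S2 \<subseteq> S" and S_S2: "S - S2 = S1" unfolding S2_def S1_def by blast+
  have "cube_count W (avoids B S2)
      \<le> cube_count W (avoids B S) + (\<Sum>c'\<in>S1. cube_count W (\<lambda>\<tau>. B c' \<tau> \<and> avoids B S2 \<tau>))"
    using avoids_count_le_split[OF finite_W finS S2, of B] unfolding S_S2 .
  hence "real (cube_count W (avoids B S2))
      \<le> cube_count W (avoids B S) + (\<Sum>c'\<in>S1. real (cube_count W (\<lambda>\<tau>. B c' \<tau> \<and> avoids B S2 \<tau>)))"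
    by (simp only: of_nat_le_iff of_nat_add of_nat_sum[symmetric])
  also have "\<dots> \<le> cube_count W (avoids B S) + (\<Sum>c'\<in>S1. 2 * p * cube_count W (avoids B S2))"
    using IH by (intro add_left_mono sum_mono) auto
  also have "\<dots> = cube_count W (avoids B S) + card S1 * (2 * p) * cube_count W (avoids B S2)"
    by simp
  also have "\<dots> \<le> cube_count W (avoids B S) + 1/2 * cube_count W (avoids B S2)"
    using small by (intro add_left_mono mult_right_mono) auto
  finally have doubling: "real (cube_count W (avoids B S2)) \<le> 2 * cube_count W (avoids B S)"
    by simp
  have "cube_count W (\<lambda>\<tau>. B c \<tau> \<and> avoids B S \<tau>) \<le> cube_count W (\<lambda>\<tau>. B c \<tau> \<and> avoids B S2 \<tau>)"
    by (rule cube_count_mono[OF finite_W]) (auto simp: avoids_def S2_def)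
  hence "real (cube_count W (\<lambda>\<tau>. B c \<tau> \<and> avoids B S \<tau>)) \<le> p * cube_count W (avoids B S2)"
    using far by linarith
  also have "\<dots> \<le> 2 * p * cube_count W (avoids B S)"
    using mult_left_mono[OF doubling p_nonneg] by simp
  finally show ?case .
qed

lemma avoids_union_ge:
  assumes S: "S \<subseteq> Cs" and T: "T \<subseteq> Cs - S"
  shows "(1 - 2 * p) ^ card T * cube_count W (avoids B S) \<le> cube_count W (avoids B (S \<union> T))"
proof -
  have "finite T" using T finite_Cs finite_subset by blast
  thus ?thesis using T
  proof (induction T rule: finite_induct)
    case empty thus ?case by simp
  next
    case (insert c T)
    let ?N = "\<lambda>S. real (cube_count W (avoids B S))"
    have "{\<tau> \<in> cube W. avoids B (S \<union> T) \<tau>}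
        = {\<tau> \<in> cube W. avoids B (S \<union> insert c T) \<tau>} \<union> {\<tau> \<in> cube W. B c \<tau> \<and> avoids B (S \<union> T) \<tau>}"
      "{\<tau> \<in> cube W. avoids B (S \<union> insert c T) \<tau>} \<inter> {\<tau> \<in> cube W. B c \<tau> \<and> avoids B (S \<union> T) \<tau>} = {}"
      unfolding avoids_def by blast+
    hence split: "?N (S \<union> T) = ?N (S \<union> insert c T) + cube_count W (\<lambda>\<tau>. B c \<tau> \<and> avoids B (S \<union> T) \<tau>)"
      unfolding cube_count_def by (simp add: card_Un_disjoint finite_cube[OF finite_W])
    have "real (cube_count W (\<lambda>\<tau>. B c \<tau> \<and> avoids B (S \<union> T) \<tau>)) \<le> 2 * p * ?N (S \<union> T)"
      by (rule bad_given_avoids_le) (use insert S in auto)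
    hence step: "(1 - 2 * p) * ?N (S \<union> T) \<le> ?N (S \<union> insert c T)"
      using split by (simp add: algebra_simps)
    have "(1 - 2 * p) ^ card (insert c T) * ?N S = (1 - 2 * p) * ((1 - 2 * p) ^ card T * ?N S)"
      using insert by simp
    also have "\<dots> \<le> (1 - 2 * p) * ?N (S \<union> T)"
      using insert four_p_le by (intro mult_left_mono) auto
    finally show ?case using step by linarith
  qed
qed

lemma avoids_count_pos:
  assumes "S \<subseteq> Cs"
  shows "0 < cube_count W (avoids B S)"
proof -
  have "0 < (1 - 2 * p) ^ card S * card (cube W)"
    using four_p_le finite_W by (simp add: card_cube)
  also have "\<dots> = (1 - 2 * p) ^ card S * cube_count W (avoids B {})"
    by (simp add: cube_count_def avoids_def)
  also have "\<dots> \<le> cube_count W (avoids B S)"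
    using avoids_union_ge[of "{}" S] assms by simp
  finally show ?thesis by simp
qed

text \<open>Local uniformity: the events whose scope misses \<open>Q\<close> are independent of the pattern on
  \<open>Q\<close>, and adding back the \<open>m\<close> others loses at most a factor \<open>(1 - 2 p)^m\<close>.\<close>

lemma restrict_avoids_le:
  assumes Q: "Q \<subseteq> W" and a: "a \<in> Q \<rightarrow>\<^sub>E (UNIV :: bool set)"
  shows "real (cube_count W (\<lambda>\<tau>. restrict \<tau> Q = a \<and> avoids B Cs \<tau>))
           * (1 - 2 * p) ^ card {c\<in>Cs. R c \<inter> Q \<noteq> {}}
         \<le> (1/2) ^ card Q * cube_count W (avoids B Cs)"
proof -
  define D1 where "D1 = {c\<in>Cs. R c \<inter> Q \<noteq> {}}"
  define D2 where "D2 = Cs - D1"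
  let ?N = "\<lambda>S. real (cube_count W (avoids B S))"
  have "depends_only W Q (\<lambda>\<tau>. restrict \<tau> Q = a)"
    unfolding depends_only_def by (auto simp: restrict_def fun_eq_iff)
  moreover have "depends_only W (W - Q) (avoids B D2)"
    by (rule depends_only_avoids) (use scope_subset in \<open>auto simp: D2_def D1_def\<close>)
  ultimately have indep: "cube_count W (\<lambda>\<tau>. restrict \<tau> Q = a \<and> avoids B D2 \<tau>) * card (cube W)
      = cube_count W (\<lambda>\<tau>. restrict \<tau> Q = a) * cube_count W (avoids B D2)"
    by (rule cube_count_conj_indep[OF Q])
  have "real (cube_count W (\<lambda>\<tau>. restrict \<tau> Q = a \<and> avoids B D2 \<tau>)) * 2 ^ card W * 2 ^ card Q
      = real (cube_count W (\<lambda>\<tau>. restrict \<tau> Q = a)) * 2 ^ card Q * ?N D2"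
    using arg_cong[OF indep, of real] card_cube[OF finite_W] by (simp add: algebra_simps)
  also have "\<dots> = 2 ^ card W * ?N D2"
    using arg_cong[OF cube_count_restrict_eq[OF finite_W Q a], of real] by simp
  finally have pattern: "real (cube_count W (\<lambda>\<tau>. restrict \<tau> Q = a \<and> avoids B D2 \<tau>)) = (1/2) ^ card Q * ?N D2"
    by (simp add: field_simps power_one_over)
  have "cube_count W (\<lambda>\<tau>. restrict \<tau> Q = a \<and> avoids B Cs \<tau>)
      \<le> cube_count W (\<lambda>\<tau>. restrict \<tau> Q = a \<and> avoids B D2 \<tau>)"
    by (rule cube_count_mono[OF finite_W]) (auto simp: avoids_def D2_def)
  hence "real (cube_count W (\<lambda>\<tau>. restrict \<tau> Q = a \<and> avoids B Cs \<tau>)) \<le> (1/2) ^ card Q * ?N D2"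
    unfolding pattern[symmetric] by simp
  hence "real (cube_count W (\<lambda>\<tau>. restrict \<tau> Q = a \<and> avoids B Cs \<tau>)) * (1 - 2 * p) ^ card D1
      \<le> (1/2) ^ card Q * ?N D2 * (1 - 2 * p) ^ card D1"
    using four_p_le by (intro mult_right_mono) auto
  also have "\<dots> = (1/2) ^ card Q * ((1 - 2 * p) ^ card D1 * ?N D2)" by simp
  also have "\<dots> \<le> (1/2) ^ card Q * ?N Cs"
  proof (rule mult_left_mono)
    have "D2 \<union> D1 = Cs" unfolding D1_def D2_def by blast
    thus "(1 - 2 * p) ^ card D1 * ?N D2 \<le> ?N Cs"
      using avoids_union_ge[of D2 D1] unfolding D1_def D2_def by auto
  qed simp
  finally show ?thesis unfolding D1_def .
qed

end

section \<open>Satisfying extensions of partial assignments\<close>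

definition clause_sat :: "'v clause \<Rightarrow> ('v \<Rightarrow> bool) \<Rightarrow> bool" where
  "clause_sat c \<omega> \<longleftrightarrow> (\<exists>(u, b)\<in>c. \<omega> u = b)"

lemma satisfies_iff_clause_sat: "satisfies \<omega> C \<longleftrightarrow> (\<forall>c\<in>C. clause_sat c \<omega>)"
  unfolding satisfies_def clause_sat_def by blast

definition sat_extensions :: "'v set \<Rightarrow> 'v clause set \<Rightarrow> 'v set \<Rightarrow> ('v \<Rightarrow> bool) \<Rightarrow> ('v \<Rightarrow> bool) set" where
  "sat_extensions V C A \<sigma> = {\<omega> \<in> sat_assignments V C. restrict \<omega> A = \<sigma>}"

lemma finite_sat_assignments: "finite V \<Longrightarrow> finite (sat_assignments V C)"
  unfolding sat_assignments_def by (simp add: finite_PiE)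

lemma finite_sat_extensions: "finite V \<Longrightarrow> finite (sat_extensions V C A \<sigma>)"
  unfolding sat_extensions_def by (simp add: finite_sat_assignments)

locale glauber_formula =
  fixes V :: "'v set" and C :: "'v clause set" and M :: "'v set" and k d k\<beta> :: nat
  assumes cnf: "cnf_formula V C" and uniform: "k_uniform k C" and degree: "max_degree_le V C d"
    and M_subset: "M \<subseteq> V"
    and unmarked_vars: "\<And>c. c \<in> C \<Longrightarrow> k\<beta> \<le> card (clause_vars c - M)"
    and d_pos: "1 \<le> d" and k_pos: "1 \<le> k"
    and k\<beta>_large: "2 ^ 16 * d ^ 9 * k ^ 9 \<le> (2::nat) ^ k\<beta>"
begin

definition p :: real where "p = (1/2) ^ k\<beta>"

lemma finite_V: "finite V" using cnf unfolding cnf_formula_def by blast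

lemma finite_C: "finite C" using cnf unfolding cnf_formula_def by blast

lemma finite_M: "finite M" using M_subset finite_V finite_subset by blast

lemma clause_vars_subset: "c \<in> C \<Longrightarrow> clause_vars c \<subseteq> V"
  using cnf unfolding cnf_formula_def clause_vars_def by blast

lemma card_clause_vars: "c \<in> C \<Longrightarrow> card (clause_vars c) = k"
  using uniform unfolding k_uniform_def clause_vars_def by blast

lemma clause_vars_nonempty: "c \<in> C \<Longrightarrow> clause_vars c \<noteq> {}"
  using card_clause_vars k_pos by fastforce

lemma card_clauses_of_var: "u \<in> V \<Longrightarrow> card {c\<in>C. u \<in> clause_vars c} \<le> d"
  using degree unfolding max_degree_le_def by blast

lemma card_clauses_meeting:
  assumes Q: "Q \<subseteq> V" and RR: "\<And>c. RR c \<subseteq> clause_vars c"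
  shows "card {c\<in>C. RR c \<inter> Q \<noteq> {}} \<le> d * card Q"
proof -
  have finQ: "finite Q" using Q finite_V finite_subset by blast
  have "{c\<in>C. RR c \<inter> Q \<noteq> {}} \<subseteq> (\<Union>u\<in>Q. {c\<in>C. u \<in> clause_vars c})" using RR by blast
  hence "card {c\<in>C. RR c \<inter> Q \<noteq> {}} \<le> card (\<Union>u\<in>Q. {c\<in>C. u \<in> clause_vars c})"
    using finite_C finQ by (intro card_mono) auto
  also have "\<dots> \<le> (\<Sum>u\<in>Q. card {c\<in>C. u \<in> clause_vars c})" by (rule card_UN_le[OF finQ])
  also have "\<dots> \<le> (\<Sum>u\<in>Q. d)" using Q card_clauses_of_var by (intro sum_mono) auto
  finally show ?thesis by (simp add: mult.commute)
qed

lemma card_clauses_meeting_clause: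
  "c \<in> C \<Longrightarrow> card {c'\<in>C. clause_vars c' \<inter> clause_vars c \<noteq> {}} \<le> d * k"
  using card_clauses_meeting[OF clause_vars_subset, of c clause_vars] card_clause_vars[of c] by simp

lemma p_nonneg: "0 \<le> p" unfolding p_def by simp

lemma four_p_kd_le: "4 * p * real (k * d) \<le> 1"
proof -
  have "d * k \<le> d ^ 9 * k ^ 9"
    using d_pos k_pos by (intro mult_mono) (auto simp: self_le_power)
  hence "4 * (k * d) \<le> 2 ^ 16 * d ^ 9 * k ^ 9" by (simp add: mult.commute)
  hence "4 * (k * d) \<le> (2::nat) ^ k\<beta>" using k\<beta>_large by linarith
  hence "real (4 * (k * d)) \<le> 2 ^ k\<beta>" by (metis of_nat_le_iff of_nat_numeral of_nat_power)
  thus ?thesis unfolding p_def by (simp add: field_simps power_one_over)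
qed

lemma four_p_le: "4 * p \<le> 1"
proof -
  have "1 \<le> k * d" using d_pos k_pos by (simp add: one_le_mult_iff)
  hence "1 \<le> real (k * d)" by (metis of_nat_1 of_nat_le_iff)
  hence "4 * p \<le> 4 * p * real (k * d)" using p_nonneg by (simp add: mult_le_cancel_left1)
  thus ?thesis using four_p_kd_le by simp
qed

lemma one_minus_two_p_pos: "0 < 1 - 2 * p" using four_p_le by simp

definition theta :: real where "theta = (1/2) / (1 - 2 * p) ^ d"

lemma theta_pos: "0 < theta" unfolding theta_def using one_minus_two_p_pos by simp

text \<open>The satisfying extensions of an assignment \<open>\<sigma>\<close> of marked variables \<open>A\<close> are the points
  of the cube on \<open>V - A\<close> avoiding the violation of every clause. Violating \<open>c\<close> fixes its at
  least \<open>k\<beta>\<close> unmarked variables, so it has probability at most \<open>p\<close>.\<close>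

context
  fixes A :: "'v set" and \<sigma> :: "'v \<Rightarrow> bool"
  assumes A_subset: "A \<subseteq> M" and \<sigma>_in: "\<sigma> \<in> A \<rightarrow>\<^sub>E (UNIV :: bool set)"
begin

definition violated :: "'v clause \<Rightarrow> ('v \<Rightarrow> bool) \<Rightarrow> bool" where
  "violated c \<tau> \<longleftrightarrow> \<not> clause_sat c (merge A \<sigma> \<tau>)"

definition free_vars :: "'v clause \<Rightarrow> 'v set" where
  "free_vars c = clause_vars c - A"

lemma violated_count_le:
  assumes c: "c \<in> C"
  shows "real (cube_count (V - A) (violated c)) \<le> p * card (cube (V - A))"
proof -
  define a0 where "a0 = (\<lambda>u\<in>free_vars c. \<not> (SOME b. (u, b) \<in> c))"
  have sub: "free_vars c \<subseteq> V - A" using clause_vars_subset[OF c] unfolding free_vars_def by blast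
  have fixes_a0: "restrict \<tau> (free_vars c) = a0" if "violated c \<tau>" for \<tau>
  proof
    fix u show "restrict \<tau> (free_vars c) u = a0 u"
    proof (cases "u \<in> free_vars c")
      case True
      then obtain b where "(u, b) \<in> c" unfolding free_vars_def clause_vars_def by auto
      hence "(u, SOME b. (u, b) \<in> c) \<in> c" by (rule someI)
      moreover have "merge A \<sigma> \<tau> u = \<tau> u" using True unfolding free_vars_def merge_def by simp
      ultimately have "\<tau> u \<noteq> (SOME b. (u, b) \<in> c)"
        using that unfolding violated_def clause_sat_def by force
      thus ?thesis using True unfolding a0_def by simp
    qed (simp add: a0_def)
  qed
  have "cube_count (V - A) (violated c) \<le> cube_count (V - A) (\<lambda>\<tau>. restrict \<tau> (free_vars c) = a0)"
    using finite_V fixes_a0 by (intro cube_count_mono) auto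
  moreover have "cube_count (V - A) (\<lambda>\<tau>. restrict \<tau> (free_vars c) = a0) * 2 ^ card (free_vars c)
      = 2 ^ card (V - A)"
    using finite_V sub by (intro cube_count_restrict_eq) (auto simp: a0_def)
  ultimately have "real (cube_count (V - A) (violated c)) * 2 ^ card (free_vars c) \<le> 2 ^ card (V - A)"
    by (metis (mono_tags, lifting) mult_le_mono1 of_nat_le_iff of_nat_mult of_nat_numeral of_nat_power)
  hence "real (cube_count (V - A) (violated c)) \<le> (1/2) ^ card (free_vars c) * 2 ^ card (V - A)"
    by (simp add: field_simps power_one_over)
  also have "\<dots> \<le> p * 2 ^ card (V - A)"
  proof -
    have "clause_vars c - M \<subseteq> free_vars c" unfolding free_vars_def using A_subset by blast
    hence "k\<beta> \<le> card (free_vars c)"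
      using unmarked_vars[OF c] sub finite_V by (meson card_mono finite_Diff finite_subset order_trans)
    thus ?thesis unfolding p_def by (intro mult_right_mono power_decreasing) auto
  qed
  finally show ?thesis using finite_V by (simp add: card_cube)
qed

lemma symmetric_lll_violated: "symmetric_lll (V - A) C violated free_vars p (k * d)"
proof
  show "depends_only (V - A) (free_vars c) (violated c)" for c
    unfolding depends_only_def violated_def
  proof (intro ballI impI)
    fix \<tau> \<tau>' :: "'v \<Rightarrow> bool" assume "\<forall>u\<in>free_vars c. \<tau> u = \<tau>' u"
    hence "\<forall>u\<in>clause_vars c. merge A \<sigma> \<tau> u = merge A \<sigma> \<tau>' u"
      unfolding free_vars_def merge_def by auto
    thus "(\<not> clause_sat c (merge A \<sigma> \<tau>)) = (\<not> clause_sat c (merge A \<sigma> \<tau>'))"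
      unfolding clause_sat_def clause_vars_def by force
  qed
  show "card {c' \<in> C. free_vars c' \<inter> free_vars c \<noteq> {}} \<le> k * d" if c: "c \<in> C" for c
  proof -
    have "{c' \<in> C. free_vars c' \<inter> free_vars c \<noteq> {}} \<subseteq> {c' \<in> C. clause_vars c' \<inter> clause_vars c \<noteq> {}}"
      unfolding free_vars_def by blast
    hence "card {c' \<in> C. free_vars c' \<inter> free_vars c \<noteq> {}} \<le> card {c' \<in> C. clause_vars c' \<inter> clause_vars c \<noteq> {}}"
      using finite_C by (intro card_mono) auto
    thus ?thesis using card_clauses_meeting_clause[OF c] by (simp add: mult.commute)
  qed
qed (use finite_V finite_C clause_vars_subset violated_count_le four_p_kd_le p_nonneg four_p_le
      in \<open>auto simp: free_vars_def\<close>)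

lemma sat_extensions_bij_avoids:
  "bij_betw (\<lambda>\<omega>. restrict \<omega> (V - A)) {\<omega> \<in> sat_extensions V C A \<sigma>. P \<omega>}
      {\<tau> \<in> cube (V - A). P (merge A \<sigma> \<tau>) \<and> avoids violated C \<tau>}"
proof (rule bij_betw_byWitness[where f' = "merge A \<sigma>"])
  have merge_restrict: "merge A \<sigma> (restrict \<omega> (V - A)) = \<omega>" if "\<omega> \<in> sat_extensions V C A \<sigma>" for \<omega>
  proof
    fix u
    have "\<omega> \<in> V \<rightarrow>\<^sub>E UNIV" "restrict \<omega> A = \<sigma>"
      using that unfolding sat_extensions_def sat_assignments_def by auto
    thus "merge A \<sigma> (restrict \<omega> (V - A)) u = \<omega> u"
      unfolding merge_def by (cases "u \<in> A") (auto simp: PiE_def extensional_def restrict_def)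
  qed
  have merge_in: "merge A \<sigma> \<tau> \<in> V \<rightarrow>\<^sub>E UNIV" "restrict (merge A \<sigma> \<tau>) A = \<sigma>"
    if "\<tau> \<in> cube (V - A)" for \<tau>
    using that \<sigma>_in A_subset M_subset unfolding cube_def merge_def
    by (auto simp: PiE_def extensional_def fun_eq_iff)
  show "\<forall>\<omega>\<in>{\<omega> \<in> sat_extensions V C A \<sigma>. P \<omega>}. merge A \<sigma> (restrict \<omega> (V - A)) = \<omega>"
    using merge_restrict by blast
  show "\<forall>\<tau>\<in>{\<tau> \<in> cube (V - A). P (merge A \<sigma> \<tau>) \<and> avoids violated C \<tau>}.
      restrict (merge A \<sigma> \<tau>) (V - A) = \<tau>"
    unfolding cube_def merge_def by (auto simp: PiE_def extensional_def fun_eq_iff)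
  show "(\<lambda>\<omega>. restrict \<omega> (V - A)) ` {\<omega> \<in> sat_extensions V C A \<sigma>. P \<omega>}
      \<subseteq> {\<tau> \<in> cube (V - A). P (merge A \<sigma> \<tau>) \<and> avoids violated C \<tau>}"
    using merge_restrict
    by (auto simp: cube_def sat_extensions_def sat_assignments_def avoids_def violated_def
        satisfies_iff_clause_sat)
  show "merge A \<sigma> ` {\<tau> \<in> cube (V - A). P (merge A \<sigma> \<tau>) \<and> avoids violated C \<tau>}
      \<subseteq> {\<omega> \<in> sat_extensions V C A \<sigma>. P \<omega>}"
    using merge_in
    by (auto simp: sat_extensions_def sat_assignments_def avoids_def violated_def satisfies_iff_clause_sat)
qed

lemma card_sat_extensions_filter:
  "card {\<omega> \<in> sat_extensions V C A \<sigma>. P \<omega>}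
    = cube_count (V - A) (\<lambda>\<tau>. P (merge A \<sigma> \<tau>) \<and> avoids violated C \<tau>)"
  unfolding cube_count_def using bij_betw_same_card[OF sat_extensions_bij_avoids] .

lemma card_sat_extensions: "card (sat_extensions V C A \<sigma>) = cube_count (V - A) (avoids violated C)"
  using card_sat_extensions_filter[of "\<lambda>_. True"] by simp

lemma card_sat_extensions_pos: "0 < card (sat_extensions V C A \<sigma>)"
  unfolding card_sat_extensions by (rule symmetric_lll.avoids_count_pos[OF symmetric_lll_violated]) simp

lemma sat_extensions_restrict_le:
  assumes Q: "Q \<subseteq> V - M" and a: "a \<in> Q \<rightarrow>\<^sub>E (UNIV :: bool set)"
  shows "real (card {\<omega> \<in> sat_extensions V C A \<sigma>. restrict \<omega> Q = a})
     \<le> theta ^ card Q * card (sat_extensions V C A \<sigma>)"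
proof -
  have QW: "Q \<subseteq> V - A" using Q A_subset by blast
  have "restrict (merge A \<sigma> \<tau>) Q = restrict \<tau> Q" for \<tau>
    using QW unfolding merge_def by (auto simp: restrict_def fun_eq_iff)
  hence count_eq: "card {\<omega> \<in> sat_extensions V C A \<sigma>. restrict \<omega> Q = a}
      = cube_count (V - A) (\<lambda>\<tau>. restrict \<tau> Q = a \<and> avoids violated C \<tau>)"
    using card_sat_extensions_filter[of "\<lambda>\<omega>. restrict \<omega> Q = a"] by simp
  have "card {c\<in>C. free_vars c \<inter> Q \<noteq> {}} \<le> d * card Q"
    using Q by (intro card_clauses_meeting) (auto simp: free_vars_def)
  hence "(1 - 2 * p) ^ (d * card Q) \<le> (1 - 2 * p) ^ card {c\<in>C. free_vars c \<inter> Q \<noteq> {}}"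
    using four_p_le p_nonneg by (intro power_decreasing) auto
  hence "real (card {\<omega> \<in> sat_extensions V C A \<sigma>. restrict \<omega> Q = a}) * (1 - 2 * p) ^ (d * card Q)
     \<le> real (card {\<omega> \<in> sat_extensions V C A \<sigma>. restrict \<omega> Q = a})
         * (1 - 2 * p) ^ card {c\<in>C. free_vars c \<inter> Q \<noteq> {}}"
    by (intro mult_left_mono) auto
  also have "\<dots> \<le> (1/2) ^ card Q * card (sat_extensions V C A \<sigma>)"
    unfolding count_eq card_sat_extensions
    by (rule symmetric_lll.restrict_avoids_le[OF symmetric_lll_violated QW a])
  finally have "real (card {\<omega> \<in> sat_extensions V C A \<sigma>. restrict \<omega> Q = a}) * ((1 - 2 * p) ^ d) ^ card Q
     \<le> (1/2) ^ card Q * card (sat_extensions V C A \<sigma>)"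
    by (simp add: power_mult)
  moreover have "0 < ((1 - 2 * p) ^ d) ^ card Q" using one_minus_two_p_pos by simp
  ultimately show ?thesis
    unfolding theta_def by (simp add: pos_le_divide_eq power_divide mult_ac)
qed

end

end

section \<open>Disagreement components\<close>

definition no_common_literal :: "'v clause \<Rightarrow> ('v \<Rightarrow> bool) \<Rightarrow> ('v \<Rightarrow> bool) \<Rightarrow> bool" where
  "no_common_literal c \<omega> \<omega>' \<longleftrightarrow> (\<forall>(u, b)\<in>c. \<not> (\<omega> u = b \<and> \<omega>' u = b))"

definition disagreement_rel :: "'v clause set \<Rightarrow> ('v \<Rightarrow> bool) \<Rightarrow> ('v \<Rightarrow> bool) \<Rightarrow> ('v \<times> 'v) set" where
  "disagreement_rel C \<omega> \<omega>' =
     {(u, w). \<exists>c\<in>C. no_common_literal c \<omega> \<omega>' \<and> u \<in> clause_vars c \<and> w \<in> clause_vars c}"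

definition disagreement_component :: "'v clause set \<Rightarrow> 'v \<Rightarrow> ('v \<Rightarrow> bool) \<Rightarrow> ('v \<Rightarrow> bool) \<Rightarrow> 'v set" where
  "disagreement_component C j \<omega> \<omega>' = {w. (j, w) \<in> (disagreement_rel C \<omega> \<omega>')\<^sup>*}"

definition swap_component ::
  "'v clause set \<Rightarrow> 'v \<Rightarrow> ('v \<Rightarrow> bool) \<times> ('v \<Rightarrow> bool) \<Rightarrow> ('v \<Rightarrow> bool) \<times> ('v \<Rightarrow> bool)" where
  "swap_component C j = (\<lambda>(\<omega>, \<omega>'). let K = disagreement_component C j \<omega> \<omega>' in (merge K \<omega> \<omega>', merge K \<omega>' \<omega>))"

lemma no_common_literal_merge_swap:
  "no_common_literal c (merge K \<omega> \<omega>') (merge K \<omega>' \<omega>) = no_common_literal c \<omega> \<omega>'"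
  unfolding no_common_literal_def merge_def by (auto split: if_splits)

lemma disagreement_component_merge_swap:
  "disagreement_component C j (merge K \<omega> \<omega>') (merge K \<omega>' \<omega>) = disagreement_component C j \<omega> \<omega>'"
  unfolding disagreement_component_def disagreement_rel_def no_common_literal_merge_swap ..

lemma disagreement_component_sym:
  "disagreement_component C j \<omega>' \<omega> = disagreement_component C j \<omega> \<omega>'"
proof -
  have "no_common_literal c \<omega>' \<omega> = no_common_literal c \<omega> \<omega>'" for c
    unfolding no_common_literal_def by auto
  thus ?thesis unfolding disagreement_component_def disagreement_rel_def by simp
qed

lemma swap_component_apply:
  "swap_component C j (\<omega>, \<omega>') =
     (merge (disagreement_component C j \<omega> \<omega>') \<omega> \<omega>', merge (disagreement_component C j \<omega> \<omega>') \<omega>' \<omega>)"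
  unfolding swap_component_def by (simp add: Let_def)

lemma swap_component_involution: "swap_component C j (swap_component C j pr) = pr"
proof (cases pr)
  case (Pair \<omega> \<omega>')
  let ?K = "disagreement_component C j \<omega> \<omega>'"
  have "swap_component C j (swap_component C j pr)
      = (merge ?K (merge ?K \<omega> \<omega>') (merge ?K \<omega>' \<omega>), merge ?K (merge ?K \<omega>' \<omega>) (merge ?K \<omega> \<omega>'))"
    unfolding Pair swap_component_apply disagreement_component_merge_swap ..
  thus ?thesis unfolding Pair merge_swap_merge .
qed

lemma self_in_disagreement_component: "j \<in> disagreement_component C j \<omega> \<omega>'"
  unfolding disagreement_component_def by simp

lemma disagreement_component_closed:
  assumes "c \<in> C" "no_common_literal c \<omega> \<omega>'" "u \<in> clause_vars c" "u \<in> disagreement_component C j \<omega> \<omega>'"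
  shows "clause_vars c \<subseteq> disagreement_component C j \<omega> \<omega>'"
proof
  fix w assume "w \<in> clause_vars c"
  hence "(u, w) \<in> disagreement_rel C \<omega> \<omega>'" unfolding disagreement_rel_def using assms by blast
  thus "w \<in> disagreement_component C j \<omega> \<omega>'"
    using assms(4) unfolding disagreement_component_def by (simp add: rtrancl_into_rtrancl)
qed

text \<open>A clause with a common true literal stays satisfied under any merge; every other clause
  is taken wholly from one of the two assignments.\<close>

lemma merge_satisfies:
  assumes sat: "satisfies \<omega> C" "satisfies \<omega>' C"
    and closed: "\<And>c. c \<in> C \<Longrightarrow> no_common_literal c \<omega> \<omega>' \<Longrightarrow> clause_vars c \<subseteq> K \<or> clause_vars c \<inter> K = {}"
  shows "satisfies (merge K \<omega> \<omega>') C"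
  unfolding satisfies_iff_clause_sat
proof
  fix c assume c: "c \<in> C"
  show "clause_sat c (merge K \<omega> \<omega>')"
  proof (cases "no_common_literal c \<omega> \<omega>'")
    case False
    then obtain u b where ub: "(u, b) \<in> c" "\<omega> u = b" "\<omega>' u = b" unfolding no_common_literal_def by blast
    hence "merge K \<omega> \<omega>' u = b" by (simp add: merge_def)
    thus ?thesis unfolding clause_sat_def using ub(1) by blast
  next
    case True
    from closed[OF c True] show ?thesis
    proof
      assume sub: "clause_vars c \<subseteq> K"
      obtain u b where ub: "(u, b) \<in> c" "\<omega> u = b"
        using sat(1) c unfolding satisfies_iff_clause_sat clause_sat_def by blast
      moreover have "u \<in> K" using sub ub(1) unfolding clause_vars_def by force
      ultimately have "merge K \<omega> \<omega>' u = b" by (simp add: merge_def)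
      thus ?thesis unfolding clause_sat_def using ub(1) by blast
    next
      assume disj: "clause_vars c \<inter> K = {}"
      obtain u b where ub: "(u, b) \<in> c" "\<omega>' u = b"
        using sat(2) c unfolding satisfies_iff_clause_sat clause_sat_def by blast
      moreover have "u \<notin> K" using disj ub(1) unfolding clause_vars_def by force
      ultimately have "merge K \<omega> \<omega>' u = b" by (simp add: merge_def)
      thus ?thesis unfolding clause_sat_def using ub(1) by blast
    qed
  qed
qed

lemma merge_component_satisfies:
  assumes "satisfies \<omega> C" "satisfies \<omega>' C"
  shows "satisfies (merge (disagreement_component C j \<omega> \<omega>') \<omega> \<omega>') C"
proof (rule merge_satisfies[OF assms])
  fix c assume c: "c \<in> C" "no_common_literal c \<omega> \<omega>'"
  show "clause_vars c \<subseteq> disagreement_component C j \<omega> \<omega>'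
        \<or> clause_vars c \<inter> disagreement_component C j \<omega> \<omega>' = {}"
  proof (cases "clause_vars c \<inter> disagreement_component C j \<omega> \<omega>' = {}")
    case False
    then obtain u where "u \<in> clause_vars c" "u \<in> disagreement_component C j \<omega> \<omega>'" by blast
    with disagreement_component_closed[OF c this] show ?thesis by blast
  qed simp
qed

lemma swap_component_sat_extensions:
  assumes agree: "\<And>u. u \<in> A \<Longrightarrow> u \<noteq> j \<Longrightarrow> \<sigma>1 u = \<sigma>0 u"
    and pr: "pr \<in> sat_extensions V C A \<sigma>1 \<times> sat_extensions V C A \<sigma>0"
  shows "swap_component C j pr \<in> sat_extensions V C A \<sigma>1 \<times> sat_extensions V C A \<sigma>0"
proof -
  obtain \<omega> \<omega>' where pr_eq: "pr = (\<omega>, \<omega>')" by (cases pr)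
  have \<omega>: "\<omega> \<in> V \<rightarrow>\<^sub>E UNIV" "satisfies \<omega> C" "restrict \<omega> A = \<sigma>1"
   and \<omega>': "\<omega>' \<in> V \<rightarrow>\<^sub>E UNIV" "satisfies \<omega>' C" "restrict \<omega>' A = \<sigma>0"
    using pr unfolding pr_eq sat_extensions_def sat_assignments_def by auto
  let ?K = "disagreement_component C j \<omega> \<omega>'"
  have j: "j \<in> ?K" by (rule self_in_disagreement_component)
  have agree': "\<omega> u = \<omega>' u" if "u \<in> A" "u \<noteq> j" for u
    using agree[OF that] \<omega>(3) \<omega>'(3) that(1) by (metis restrict_apply')
  have "restrict (merge ?K \<omega> \<omega>') A u = \<sigma>1 u" for u
    using \<omega>(3) agree'[of u] j unfolding merge_def
    by (cases "u \<in> A"; cases "u = j") (auto simp: restrict_def fun_eq_iff split: if_splits)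
  moreover have "restrict (merge ?K \<omega>' \<omega>) A u = \<sigma>0 u" for u
    using \<omega>'(3) agree'[of u] j unfolding merge_def
    by (cases "u \<in> A"; cases "u = j") (auto simp: restrict_def fun_eq_iff split: if_splits)
  moreover have "merge ?K \<omega> \<omega>' \<in> V \<rightarrow>\<^sub>E UNIV" "merge ?K \<omega>' \<omega> \<in> V \<rightarrow>\<^sub>E UNIV"
    using \<omega>(1) \<omega>'(1) unfolding merge_def by (auto simp: PiE_def extensional_def)
  moreover have "satisfies (merge ?K \<omega>' \<omega>) C"
    using merge_component_satisfies[OF \<omega>'(2) \<omega>(2), of j]
    unfolding disagreement_component_sym[of C j \<omega>' \<omega>] .
  ultimately show ?thesis
    using merge_component_satisfies[OF \<omega>(2) \<omega>'(2)]
    unfolding pr_eq swap_component_apply sat_extensions_def sat_assignments_def by (simp add: fun_eq_iff)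
qed

lemma abs_sum_le_card_of_antisymmetric:
  fixes g :: "'a \<Rightarrow> real"
  assumes h: "bij_betw h P P"
    and Q: "\<And>x. x \<in> P \<Longrightarrow> Q (h x) \<longleftrightarrow> Q x" and neg: "\<And>x. x \<in> P \<Longrightarrow> \<not> Q x \<Longrightarrow> g (h x) = - g x"
    and g: "\<And>x. x \<in> P \<Longrightarrow> \<bar>g x\<bar> \<le> 1"
  shows "\<bar>\<Sum>x\<in>P. g x\<bar> \<le> card {x \<in> P. Q x}"
proof (cases "finite P")
  case fin: True
  define g_out where "g_out x = (if Q x then 0 else g x)" for x
  have "sum g_out P = sum (g_out \<circ> h) P" using sum.reindex_bij_betw[OF h, of g_out] by simp
  also have "\<dots> = (\<Sum>x\<in>P. - g_out x)"
    by (rule sum.cong) (use Q neg in \<open>auto simp: g_out_def\<close>)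
  finally have "sum g_out P = 0" by (simp add: sum_negf)
  moreover have "(\<Sum>x\<in>P. g x) = sum g_out P + (\<Sum>x\<in>P. if Q x then g x else 0)"
    unfolding g_out_def by (simp add: sum.distrib[symmetric]) (rule sum.cong, auto)
  ultimately have "\<bar>\<Sum>x\<in>P. g x\<bar> = \<bar>\<Sum>x\<in>P. if Q x then g x else 0\<bar>" by simp
  also have "\<dots> \<le> (\<Sum>x\<in>P. if Q x then 1 else 0)"
    by (rule order_trans[OF sum_abs sum_mono]) (use g in auto)
  also have "\<dots> = card {x \<in> P. Q x}"
    using fin by (simp add: sum.If_cases Int_def conj_commute)
  finally show ?thesis .
qed simp

lemma sum_pairs_of_bool_diff:
  assumes "finite S1" "finite S0"
  shows "(\<Sum>pr\<in>S1 \<times> S0. of_bool (fst pr v) - of_bool (snd pr v) :: real)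
    = real (card S0 * card {\<omega>\<in>S1. \<omega> v}) - real (card S1 * card {\<omega>\<in>S0. \<omega> v})"
proof -
  have "(\<Sum>pr\<in>S1 \<times> S0. of_bool (fst pr v) - of_bool (snd pr v) :: real)
      = (\<Sum>\<omega>\<in>S1. \<Sum>\<omega>'\<in>S0. of_bool (\<omega> v) - of_bool (\<omega>' v))"
    unfolding sum.cartesian_product by (rule sum.cong) auto
  also have "\<dots> = (\<Sum>\<omega>\<in>S1. real (card S0) * of_bool (\<omega> v)) - (\<Sum>\<omega>\<in>S1. \<Sum>\<omega>'\<in>S0. (of_bool (\<omega>' v) :: real))"
    by (simp add: sum_subtractf)
  also have "\<dots> = real (card S0 * card {\<omega>\<in>S1. \<omega> v}) - real (card S1 * card {\<omega>\<in>S0. \<omega> v})"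
    using assms by (simp add: sum_distrib_left[symmetric] sum.If_cases of_bool_def Int_def)
  finally show ?thesis .
qed

text \<open>Coupling two boundary conditions that differ only at \<open>j\<close>: swapping the disagreement
  component of \<open>j\<close> is an involution of the pairs of extensions which negates
  \<open>\<omega> v - \<omega>' v\<close> unless \<open>v\<close> lies in that component, so only those pairs contribute.\<close>

lemma extension_marginal_diff_le:
  fixes V A :: "'v set" and C :: "'v clause set"
  assumes finV: "finite V"
    and agree: "\<And>u. u \<in> A \<Longrightarrow> u \<noteq> j \<Longrightarrow> \<sigma>1 u = \<sigma>0 u"
  defines "S1 \<equiv> sat_extensions V C A \<sigma>1" and "S0 \<equiv> sat_extensions V C A \<sigma>0"
  shows "\<bar>real (card S0 * card {\<omega>\<in>S1. \<omega> v}) - real (card S1 * card {\<omega>\<in>S0. \<omega> v})\<bar>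
          \<le> card {pr \<in> S1 \<times> S0. v \<in> disagreement_component C j (fst pr) (snd pr)}"
proof -
  let ?P = "S1 \<times> S0"
  have "swap_component C j pr \<in> ?P" if "pr \<in> ?P" for pr
    using swap_component_sat_extensions[of A j \<sigma>1 \<sigma>0 pr V C] agree that unfolding S1_def S0_def by blast
  hence "bij_betw (swap_component C j) ?P ?P"
    by (intro bij_betw_byWitness[where f' = "swap_component C j"])
      (simp_all add: swap_component_involution image_subset_iff)
  hence "\<bar>\<Sum>pr\<in>?P. of_bool (fst pr v) - of_bool (snd pr v) :: real\<bar>
      \<le> card {pr \<in> ?P. v \<in> disagreement_component C j (fst pr) (snd pr)}"
  proof (rule abs_sum_le_card_of_antisymmetric)
    fix pr :: "('v \<Rightarrow> bool) \<times> ('v \<Rightarrow> bool)"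
    obtain \<omega> \<omega>' where pr: "pr = (\<omega>, \<omega>')" by (cases pr)
    let ?K = "disagreement_component C j \<omega> \<omega>'"
    have swap: "swap_component C j pr = (merge ?K \<omega> \<omega>', merge ?K \<omega>' \<omega>)"
      unfolding pr by (rule swap_component_apply)
    show "v \<in> disagreement_component C j (fst (swap_component C j pr)) (snd (swap_component C j pr))
        \<longleftrightarrow> v \<in> disagreement_component C j (fst pr) (snd pr)"
      unfolding swap by (simp add: pr disagreement_component_merge_swap)
    show "v \<notin> disagreement_component C j (fst pr) (snd pr) \<Longrightarrow>
        of_bool (fst (swap_component C j pr) v) - of_bool (snd (swap_component C j pr) v)
        = - (of_bool (fst pr v) - of_bool (snd pr v) :: real)"
      unfolding swap by (simp add: pr merge_def)
  qed auto
  moreover have "finite S1" "finite S0" unfolding S1_def S0_def using finV by (auto intro: finite_sat_extensions)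
  ultimately show ?thesis by (simp add: sum_pairs_of_bool_diff)
qed

section \<open>Induced paths of clauses\<close>

lemma successively_take: "successively P xs \<Longrightarrow> successively P (take n xs)"
  using successively_append_iff[of P "take n xs" "drop n xs"] by simp

lemma successively_drop: "successively P xs \<Longrightarrow> successively P (drop n xs)"
  using successively_append_iff[of P "take n xs" "drop n xs"] by simp

definition clause_path :: "'v clause set \<Rightarrow> 'v clause list \<Rightarrow> bool" where
  "clause_path C cs \<longleftrightarrow>
     cs \<noteq> [] \<and> set cs \<subseteq> C \<and> successively (\<lambda>c c'. clause_vars c \<inter> clause_vars c' \<noteq> {}) cs"

definition induced_path :: "'v clause list \<Rightarrow> bool" where
  "induced_path cs \<longleftrightarrow>
     (\<forall>i i'. i + 2 \<le> i' \<and> i' < length cs \<longrightarrow> clause_vars (cs ! i) \<inter> clause_vars (cs ! i') = {})"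

lemma clause_path_snoc:
  "clause_path C cs \<Longrightarrow> c \<in> C \<Longrightarrow> clause_vars (last cs) \<inter> clause_vars c \<noteq> {} \<Longrightarrow> clause_path C (cs @ [c])"
  unfolding clause_path_def by (simp add: successively_append_iff)

lemma clause_path_snocD:
  "clause_path C (cs @ [c]) \<Longrightarrow> cs \<noteq> [] \<Longrightarrow>
    clause_path C cs \<and> c \<in> C \<and> clause_vars (last cs) \<inter> clause_vars c \<noteq> {}"
  unfolding clause_path_def by (simp add: successively_append_iff)

lemma clause_path_of_component:
  assumes "(j, w) \<in> (disagreement_rel C \<omega> \<omega>')\<^sup>*" "w \<noteq> j"
  shows "\<exists>cs. clause_path C cs \<and> j \<in> clause_vars (hd cs) \<and> w \<in> clause_vars (last cs)
           \<and> (\<forall>c\<in>set cs. no_common_literal c \<omega> \<omega>')"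
  using assms
proof (induction rule: rtrancl_induct)
  case (step y z)
  from step.hyps(2) obtain c where c: "c \<in> C" "no_common_literal c \<omega> \<omega>'" "y \<in> clause_vars c" "z \<in> clause_vars c"
    unfolding disagreement_rel_def by blast
  show ?case
  proof (cases "y = j")
    case True
    thus ?thesis using c by (intro exI[of _ "[c]"]) (auto simp: clause_path_def)
  next
    case False
    then obtain cs where cs: "clause_path C cs" "j \<in> clause_vars (hd cs)" "y \<in> clause_vars (last cs)"
      "\<forall>c\<in>set cs. no_common_literal c \<omega> \<omega>'" using step.IH by blast
    have "cs \<noteq> []" using cs(1) unfolding clause_path_def by simp
    moreover have "clause_path C (cs @ [c])" by (rule clause_path_snoc) (use cs c in auto)
    ultimately show ?thesis using cs c by (intro exI[of _ "cs @ [c]"]) auto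
  qed
qed simp

lemma clause_path_shortcut:
  assumes path: "clause_path C cs" and ii: "i < i'" "i' < length cs"
    and meet: "clause_vars (cs ! i) \<inter> clause_vars (cs ! i') \<noteq> {}"
  shows "clause_path C (take (Suc i) cs @ drop i' cs)"
proof -
  let ?P = "\<lambda>c c'. clause_vars c \<inter> clause_vars c' \<noteq> {}"
  have C: "set cs \<subseteq> C" and succ: "successively ?P cs" using path unfolding clause_path_def by auto
  have "take (Suc i) cs \<noteq> []" using ii by (cases cs) auto
  hence "last (take (Suc i) cs) = cs ! i" using ii by (simp add: last_conv_nth min_def)
  moreover have "hd (drop i' cs) = cs ! i'" using ii by (simp add: hd_drop_conv_nth)
  moreover have "set (take (Suc i) cs) \<subseteq> C" using set_take_subset[of "Suc i" cs] C by (rule order_trans)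
  moreover have "set (drop i' cs) \<subseteq> C" using set_drop_subset[of i' cs] C by (rule order_trans)
  ultimately show ?thesis
    unfolding clause_path_def successively_append_iff
    using successively_take[OF succ] successively_drop[OF succ] meet ii by simp
qed

text \<open>A shortest such path is induced: a variable shared by clauses two or more steps apart
  would give a shortcut.\<close>

lemma induced_path_of_component:
  assumes "w \<in> disagreement_component C j \<omega> \<omega>'" "w \<noteq> j"
  shows "\<exists>cs. clause_path C cs \<and> induced_path cs \<and> j \<in> clause_vars (hd cs) \<and> w \<in> clause_vars (last cs)
           \<and> (\<forall>c\<in>set cs. no_common_literal c \<omega> \<omega>')"
proof -
  define G where "G cs \<longleftrightarrow> clause_path C cs \<and> j \<in> clause_vars (hd cs) \<and> w \<in> clause_vars (last cs)
    \<and> (\<forall>c\<in>set cs. no_common_literal c \<omega> \<omega>')" for cs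
  obtain cs0 where "G cs0"
    using clause_path_of_component[OF assms[unfolded disagreement_component_def, simplified]] assms(2)
    unfolding G_def by blast
  then obtain cs where G: "G cs" and min: "\<And>cs'. G cs' \<Longrightarrow> length cs \<le> length cs'"
    using ex_has_least_nat[of G cs0 length] by blast
  have "induced_path cs" unfolding induced_path_def
  proof (intro allI impI, rule ccontr)
    fix i i' assume ii: "i + 2 \<le> i' \<and> i' < length cs"
      and meet: "clause_vars (cs ! i) \<inter> clause_vars (cs ! i') \<noteq> {}"
    let ?cs = "take (Suc i) cs @ drop i' cs"
    have "clause_path C ?cs" using G ii meet unfolding G_def by (intro clause_path_shortcut) auto
    moreover have "hd ?cs = hd cs" "last ?cs = last cs" using ii by (auto simp: hd_append)
    moreover have "set ?cs \<subseteq> set cs" using set_take_subset set_drop_subset by (metis Un_least set_append)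
    ultimately have "G ?cs" using G unfolding G_def by (auto simp del: set_append)
    moreover have "length ?cs = Suc i + (length cs - i')" using ii by simp
    hence "length ?cs < length cs" using ii by linarith
    ultimately show False using min by fastforce
  qed
  thus ?thesis using G unfolding G_def by blast
qed

definition alternate_clauses :: "'a list \<Rightarrow> 'a set" where
  "alternate_clauses cs = (\<lambda>i. cs ! (2 * i)) ` {i. 2 * i < length cs}"

lemma alternate_clauses_subset: "alternate_clauses cs \<subseteq> set cs"
  unfolding alternate_clauses_def by auto

lemma alternate_clauses_disjoint:
  assumes "induced_path cs" "c1 \<in> alternate_clauses cs" "c2 \<in> alternate_clauses cs" "c1 \<noteq> c2"
  shows "clause_vars c1 \<inter> clause_vars c2 = {}"
proof -
  obtain i1 where i1: "2 * i1 < length cs" "c1 = cs ! (2 * i1)"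
    using assms(2) unfolding alternate_clauses_def by auto
  obtain i2 where i2: "2 * i2 < length cs" "c2 = cs ! (2 * i2)"
    using assms(3) unfolding alternate_clauses_def by auto
  have "i1 \<noteq> i2" using i1 i2 assms(4) by auto
  hence "2 * i1 + 2 \<le> 2 * i2 \<or> 2 * i2 + 2 \<le> 2 * i1" by auto
  thus ?thesis using assms(1) i1 i2 unfolding induced_path_def by (metis Int_commute)
qed

lemma card_alternate_clauses:
  assumes "induced_path cs" and nonempty: "\<And>c. c \<in> set cs \<Longrightarrow> clause_vars c \<noteq> {}"
  shows "card (alternate_clauses cs) = (length cs + 1) div 2"
proof -
  have "inj_on (\<lambda>i. cs ! (2 * i)) {i. 2 * i < length cs}"
  proof (rule inj_onI, rule ccontr)
    fix i1 i2 assume i: "i1 \<in> {i. 2 * i < length cs}" "i2 \<in> {i. 2 * i < length cs}"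
      "cs ! (2 * i1) = cs ! (2 * i2)" "i1 \<noteq> i2"
    hence "2 * i1 + 2 \<le> 2 * i2 \<or> 2 * i2 + 2 \<le> 2 * i1" by auto
    hence "clause_vars (cs ! (2 * i1)) \<inter> clause_vars (cs ! (2 * i2)) = {}"
      using assms(1) i unfolding induced_path_def by (metis Int_commute mem_Collect_eq)
    moreover have "cs ! (2 * i1) \<in> set cs" using i(1) by simp
    ultimately show False using nonempty i(3) by auto
  qed
  hence "card (alternate_clauses cs) = card {i. 2 * i < length cs}"
    unfolding alternate_clauses_def by (rule card_image)
  also have "{i. 2 * i < length cs} = {..< (length cs + 1) div 2}" by auto
  finally show ?thesis by simp
qed

section \<open>Induced paths without common literals are rare\<close>

definition never_both_equal :: "'a set \<Rightarrow> ('a \<Rightarrow> bool) \<Rightarrow> ('a \<Rightarrow> bool) \<Rightarrow> ('a \<Rightarrow> bool) \<Rightarrow> bool" where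
  "never_both_equal Q s x y \<longleftrightarrow> (\<forall>u\<in>Q. \<not> (x u = s u \<and> y u = s u))"

lemma card_never_both_equal_le:
  assumes finQ: "finite Q"
  shows "card {pr \<in> cube Q \<times> cube Q. never_both_equal Q s (fst pr) (snd pr)} \<le> 3 ^ card Q"
proof -
  let ?Pat = "{pr \<in> cube Q \<times> cube Q. never_both_equal Q s (fst pr) (snd pr)}"
  let ?T = "\<lambda>u. {xy :: bool \<times> bool. \<not> (fst xy = s u \<and> snd xy = s u)}"
  let ?f = "\<lambda>pr. (\<lambda>u\<in>Q. (fst pr u, snd pr u))"
  have "inj_on ?f ?Pat"
  proof (rule inj_onI)
    fix x y assume x: "x \<in> ?Pat" and y: "y \<in> ?Pat" and e: "?f x = ?f y"
    have "fst x u = fst y u \<and> snd x u = snd y u" for u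
    proof (cases "u \<in> Q")
      case True thus ?thesis using fun_cong[OF e, of u] by simp
    next
      case False thus ?thesis using x y by (auto simp: cube_def PiE_def extensional_def)
    qed
    thus "x = y" by (simp add: fun_eq_iff prod_eq_iff)
  qed
  moreover have "?f pr \<in> Pi\<^sub>E Q ?T" if "pr \<in> ?Pat" for pr
    using that by (simp add: never_both_equal_def restrict_PiE_iff)
  hence "?f ` ?Pat \<subseteq> Pi\<^sub>E Q ?T" by blast
  moreover have "finite (Pi\<^sub>E Q ?T)" using finQ by (simp add: finite_PiE)
  ultimately have "card ?Pat \<le> card (Pi\<^sub>E Q ?T)" by (rule card_inj_on_le)
  also have "\<dots> = (\<Prod>u\<in>Q. card (?T u))" using finQ by (rule card_PiE)
  also have "\<dots> = (\<Prod>u\<in>Q. 3)"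
  proof (rule prod.cong)
    fix u
    have "?T u = {(\<not> s u, \<not> s u), (\<not> s u, s u), (s u, \<not> s u)}" by auto
    thus "card (?T u) = 3" by (cases "s u") auto
  qed simp
  finally show ?thesis by simp
qed

lemma card_pairs_never_both_le_sum:
  assumes finQ: "finite Q" and fin: "finite E1" "finite E0"
  shows "card {pr \<in> E1 \<times> E0. never_both_equal Q s (fst pr) (snd pr)}
    \<le> (\<Sum>ab\<in>{pr \<in> cube Q \<times> cube Q. never_both_equal Q s (fst pr) (snd pr)}.
          card {\<omega> \<in> E1. restrict \<omega> Q = fst ab} * card {\<omega> \<in> E0. restrict \<omega> Q = snd ab})"
proof -
  let ?Pat = "{pr \<in> cube Q \<times> cube Q. never_both_equal Q s (fst pr) (snd pr)}"
  let ?F = "\<lambda>ab. {\<omega> \<in> E1. restrict \<omega> Q = fst ab} \<times> {\<omega> \<in> E0. restrict \<omega> Q = snd ab}"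
  have finPat: "finite ?Pat" using finQ by (simp add: finite_cube)
  have "{pr \<in> E1 \<times> E0. never_both_equal Q s (fst pr) (snd pr)} \<subseteq> (\<Union>ab\<in>?Pat. ?F ab)"
  proof
    fix pr assume pr: "pr \<in> {pr \<in> E1 \<times> E0. never_both_equal Q s (fst pr) (snd pr)}"
    let ?ab = "(restrict (fst pr) Q, restrict (snd pr) Q)"
    have "?ab \<in> ?Pat" using pr by (auto simp: cube_def never_both_equal_def)
    moreover have "pr \<in> ?F ?ab" using pr by auto
    ultimately show "pr \<in> (\<Union>ab\<in>?Pat. ?F ab)" by blast
  qed
  hence "card {pr \<in> E1 \<times> E0. never_both_equal Q s (fst pr) (snd pr)} \<le> card (\<Union>ab\<in>?Pat. ?F ab)"
    using finPat fin by (intro card_mono) auto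
  also have "\<dots> \<le> (\<Sum>ab\<in>?Pat. card (?F ab))" by (rule card_UN_le[OF finPat])
  finally show ?thesis by (simp add: card_cartesian_product)
qed

lemma sum_quarter_powers: "(\<Sum>l\<in>{1..L}. (1/4::real) ^ l) = (1 - (1/4) ^ L) / 3"
proof (induction L)
  case (Suc L)
  have "(\<Sum>l\<in>{1..Suc L}. (1/4::real) ^ l) = (1 - (1/4) ^ L) / 3 + (1/4) * (1/4) ^ L"
    using Suc by (simp add: sum.cl_ivl_Suc)
  also have "\<dots> = (1 - (1/4) ^ Suc L) / 3" by (simp add: field_simps)
  finally show ?case .
qed simp

context glauber_formula
begin

definition rho :: real where "rho = 3 * theta ^ 2"

definition path_decay :: real where "path_decay = rho ^ k\<beta>"

definition path_weight :: "'v clause list \<Rightarrow> real" where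
  "path_weight cs = path_decay ^ ((length cs + 1) div 2)"

lemma p_d_le: "p * real d \<le> 1 / 2 ^ 16"
proof -
  have "d * k \<le> d ^ 9 * k ^ 9"
    using d_pos k_pos by (intro mult_mono) (auto simp: self_le_power)
  moreover have "d \<le> d * k" using k_pos by simp
  ultimately have "d \<le> d ^ 9 * k ^ 9" by linarith
  hence "2 ^ 16 * d \<le> 2 ^ 16 * (d ^ 9 * k ^ 9)" by simp
  hence "2 ^ 16 * d \<le> (2::nat) ^ k\<beta>" using k\<beta>_large by (simp add: mult.assoc)
  hence "real (2 ^ 16 * d) \<le> real (2 ^ k\<beta>)" by (simp only: of_nat_le_iff)
  hence "2 ^ 16 * real d \<le> 2 ^ k\<beta>" by simp
  thus ?thesis unfolding p_def by (simp add: field_simps power_one_over)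
qed

lemma one_minus_two_p_pow_d_ge: "1 - 1 / 2 ^ 15 \<le> (1 - 2 * p) ^ d"
proof -
  have "1 + real d * (- 2 * p) \<le> (1 + (- 2 * p)) ^ d"
    by (rule Bernoulli_inequality) (use four_p_le in simp)
  moreover have "real d * (2 * p) \<le> 2 / 2 ^ 16" using p_d_le by (simp add: algebra_simps)
  ultimately show ?thesis by simp
qed

lemma rho_nonneg: "0 \<le> rho" unfolding rho_def by simp

lemma rho_le: "rho \<le> 751 / 1000"
proof -
  have q: "1 - 1 / 2 ^ 15 \<le> (1 - 2 * p) ^ d" by (rule one_minus_two_p_pow_d_ge)
  have q0: "(0::real) < 1 - 1 / 2 ^ 15" by simp
  have "theta \<le> (1/2) / (1 - 1 / 2 ^ 15)" unfolding theta_def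
    by (rule divide_left_mono[OF q]) (use q0 q in auto)
  hence "theta ^ 2 \<le> ((1/2) / (1 - 1 / 2 ^ 15)) ^ 2" using theta_pos by (intro power_mono) auto
  hence "rho \<le> 3 * ((1/2) / (1 - 1 / 2 ^ 15)) ^ 2" unfolding rho_def by simp
  also have "\<dots> \<le> 751 / 1000" by (simp add: power2_eq_square)
  finally show ?thesis .
qed


lemma path_decay_nonneg: "0 \<le> path_decay" unfolding path_decay_def using rho_nonneg by simp

lemma path_decay_pow5_le: "path_decay ^ 5 \<le> (1/4) ^ k\<beta>"
proof -
  have "rho ^ 5 \<le> (751 / 1000) ^ 5" using rho_le rho_nonneg by (intro power_mono) auto
  also have "\<dots> \<le> 1/4" by (simp add: power_divide)
  finally have r5: "rho ^ 5 \<le> 1/4" .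
  have "path_decay ^ 5 = (rho ^ 5) ^ k\<beta>" unfolding path_decay_def by (simp add: power_mult[symmetric] mult.commute)
  also have "\<dots> \<le> (1/4) ^ k\<beta>" using r5 rho_nonneg by (intro power_mono) auto
  finally show ?thesis .
qed

lemma kd_sq_path_decay_le: "real (k * d) ^ 2 * path_decay \<le> 1/16"
proof -
  define x where "x = real (k * d)"
  have x1: "1 \<le> x" unfolding x_def using d_pos k_pos
    by (metis One_nat_def Suc_le_eq mult_pos_pos of_nat_1 of_nat_le_iff)
  have n: "2 ^ 16 * x ^ 9 \<le> 2 ^ k\<beta>"
  proof -
    have "real (2 ^ 16 * d ^ 9 * k ^ 9) \<le> real ((2::nat) ^ k\<beta>)" using k\<beta>_large by (simp only: of_nat_le_iff)
    thus ?thesis unfolding x_def by (simp add: power_mult_distrib mult.commute mult.left_commute)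
  qed
  have "(x ^ 2 * path_decay) ^ 5 = x ^ 10 * path_decay ^ 5" by (simp add: power_mult_distrib power_mult[symmetric])
  also have "\<dots> \<le> x ^ 10 * (1/4) ^ k\<beta>" using path_decay_pow5_le x1 by (intro mult_left_mono) auto
  also have "\<dots> = x ^ 10 / (2 ^ k\<beta>) ^ 2"
  proof -
    have "(4::real) ^ k\<beta> = (2 ^ 2) ^ k\<beta>" by simp
    also have "\<dots> = 2 ^ (2 * k\<beta>)" by (simp only: power_mult)
    also have "\<dots> = (2 ^ k\<beta>) ^ 2" by (simp only: power_mult mult.commute)
    finally have "(4::real) ^ k\<beta> = (2 ^ k\<beta>) ^ 2" .
    thus ?thesis by (simp add: power_one_over)
  qed
  also have "\<dots> \<le> x ^ 10 / (2 ^ 16 * x ^ 9) ^ 2"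
  proof (rule divide_left_mono)
    show "(2 ^ 16 * x ^ 9) ^ 2 \<le> (2 ^ k\<beta>) ^ 2" using n x1 by (intro power_mono) auto
    show "0 \<le> x ^ 10" using x1 by simp
    show "0 < (2 ^ k\<beta>) ^ 2 * (2 ^ 16 * x ^ 9) ^ 2" using x1 by simp
  qed
  also have "\<dots> = 1 / (2 ^ 32 * x ^ 8)" using x1 by (simp add: power_mult_distrib field_simps)
  also have "\<dots> \<le> 1 / 2 ^ 32"
  proof -
    have "1 \<le> x ^ 8" using x1 by (simp add: one_le_power)
    hence "(2::real) ^ 32 \<le> 2 ^ 32 * x ^ 8" by simp
    thus ?thesis using x1 by (intro divide_left_mono) auto
  qed
  also have "\<dots> \<le> (1/16) ^ 5" by (simp add: power_divide)
  finally have f5: "(x ^ 2 * path_decay) ^ 5 \<le> (1/16) ^ 5" .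
  have five: "Suc 4 = (5::nat)" by simp
  have "(x ^ 2 * path_decay) ^ Suc 4 \<le> (1/16) ^ Suc 4" unfolding five by (rule f5)
  hence "x ^ 2 * path_decay \<le> 1/16"
    by (rule power_le_imp_le_base) simp
  thus ?thesis unfolding x_def .
qed

lemma kd_pow_path_decay_le:
  assumes "1 \<le> l"
  shows "real (k * d) ^ l * path_decay ^ ((l + 1) div 2) \<le> (1/4) ^ l"
proof -
  define x where "x = real (k * d)"
  define h where "h = (l + 1) div 2"
  have x1: "1 \<le> x" unfolding x_def using d_pos k_pos
    by (metis One_nat_def Suc_le_eq mult_pos_pos of_nat_1 of_nat_le_iff)
  have lh: "l \<le> 2 * h" unfolding h_def by simp
  have "x ^ l * path_decay ^ h \<le> x ^ (2 * h) * path_decay ^ h"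
    using x1 lh path_decay_nonneg by (intro mult_right_mono power_increasing) auto
  also have "\<dots> = (x ^ 2 * path_decay) ^ h" by (simp add: power_mult power_mult_distrib)
  also have "\<dots> \<le> (1/16) ^ h" using kd_sq_path_decay_le path_decay_nonneg unfolding x_def[symmetric]
    by (intro power_mono) auto
  also have "\<dots> = (1/4) ^ (2 * h)"
  proof -
    have "(1/4::real) ^ (2 * h) = ((1/4) ^ 2) ^ h" by (simp only: power_mult)
    moreover have "((1/4::real) ^ 2) = 1/16" by (simp add: power2_eq_square)
    ultimately show ?thesis by simp
  qed
  also have "\<dots> \<le> (1/4) ^ l" using lh by (intro power_decreasing) auto
  finally show ?thesis unfolding x_def h_def .
qed

lemma card_extension_pairs_never_both_le:
  assumes A: "A \<subseteq> M" and \<sigma>1: "\<sigma>1 \<in> A \<rightarrow>\<^sub>E (UNIV :: bool set)" and \<sigma>0: "\<sigma>0 \<in> A \<rightarrow>\<^sub>E (UNIV :: bool set)"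
    and Q: "Q \<subseteq> V - M"
  shows "real (card {pr \<in> sat_extensions V C A \<sigma>1 \<times> sat_extensions V C A \<sigma>0.
                       never_both_equal Q s (fst pr) (snd pr)})
     \<le> rho ^ card Q * card (sat_extensions V C A \<sigma>1) * card (sat_extensions V C A \<sigma>0)"
proof -
  let ?E1 = "sat_extensions V C A \<sigma>1" and ?E0 = "sat_extensions V C A \<sigma>0"
  let ?Pat = "{pr \<in> cube Q \<times> cube Q. never_both_equal Q s (fst pr) (snd pr)}"
  let ?F = "\<lambda>ab. {\<omega> \<in> ?E1. restrict \<omega> Q = fst ab} \<times> {\<omega> \<in> ?E0. restrict \<omega> Q = snd ab}"
  let ?bound = "(theta ^ card Q * card ?E1) * (theta ^ card Q * card ?E0)"
  have finQ: "finite Q" using Q finite_V finite_subset by blast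
  have "card {pr \<in> ?E1 \<times> ?E0. never_both_equal Q s (fst pr) (snd pr)} \<le> (\<Sum>ab\<in>?Pat. card (?F ab))"
    using card_pairs_never_both_le_sum[OF finQ, of ?E1 ?E0 s] finite_V
    by (simp add: finite_sat_extensions card_cartesian_product)
  hence "real (card {pr \<in> ?E1 \<times> ?E0. never_both_equal Q s (fst pr) (snd pr)})
      \<le> (\<Sum>ab\<in>?Pat. real (card (?F ab)))"
    by (simp only: of_nat_le_iff of_nat_sum[symmetric])
  also have "\<dots> \<le> (\<Sum>ab\<in>?Pat. ?bound)"
  proof (rule sum_mono)
    fix ab assume ab: "ab \<in> ?Pat"
    have "real (card (?F ab))
        = real (card {\<omega> \<in> ?E1. restrict \<omega> Q = fst ab}) * real (card {\<omega> \<in> ?E0. restrict \<omega> Q = snd ab})"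
      by (simp add: card_cartesian_product)
    also have "\<dots> \<le> ?bound"
      using ab theta_pos
      by (intro mult_mono sat_extensions_restrict_le[OF A \<sigma>1 Q] sat_extensions_restrict_le[OF A \<sigma>0 Q])
        (auto simp: cube_def)
    finally show "real (card (?F ab)) \<le> ?bound" .
  qed
  also have "\<dots> = card ?Pat * ?bound" by simp
  also have "\<dots> \<le> 3 ^ card Q * ?bound"
    using card_never_both_equal_le[OF finQ, of s] theta_pos
    by (intro mult_right_mono) (auto simp: of_nat_le_iff[symmetric])
  also have "\<dots> = rho ^ card Q * card ?E1 * card ?E0"
    unfolding rho_def by (simp add: power_mult_distrib power_mult[symmetric] algebra_simps power2_eq_square)
  finally show ?thesis .
qed

lemma card_alternate_clauses_path:
  assumes "clause_path C cs" "induced_path cs"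
  shows "card (alternate_clauses cs) = (length cs + 1) div 2"
  using assms clause_vars_nonempty unfolding clause_path_def by (intro card_alternate_clauses) auto

lemma card_unmarked_alternate_ge:
  assumes path: "clause_path C cs" and induced: "induced_path cs"
  shows "k\<beta> * ((length cs + 1) div 2) \<le> card (\<Union>c\<in>alternate_clauses cs. clause_vars c - M)"
proof -
  let ?Alt = "alternate_clauses cs"
  have Alt: "?Alt \<subseteq> C" using alternate_clauses_subset[of cs] path unfolding clause_path_def by blast
  have "k\<beta> * ((length cs + 1) div 2) = (\<Sum>c\<in>?Alt. k\<beta>)"
    using card_alternate_clauses_path[OF path induced] by (simp add: mult.commute)
  also have "\<dots> \<le> (\<Sum>c\<in>?Alt. card (clause_vars c - M))" using Alt unmarked_vars by (intro sum_mono) auto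
  also have "\<dots> = card (\<Union>c\<in>?Alt. clause_vars c - M)"
  proof (rule card_UN_disjoint[symmetric])
    show "finite ?Alt" using Alt finite_C finite_subset by blast
    show "\<forall>c\<in>?Alt. finite (clause_vars c - M)"
    proof
      fix c assume "c \<in> ?Alt"
      thus "finite (clause_vars c - M)" using Alt clause_vars_subset finite_V by (blast intro: finite_subset)
    qed
    show "\<forall>c1\<in>?Alt. \<forall>c2\<in>?Alt. c1 \<noteq> c2 \<longrightarrow> (clause_vars c1 - M) \<inter> (clause_vars c2 - M) = {}"
    proof (intro ballI impI)
      fix c1 c2 assume "c1 \<in> ?Alt" "c2 \<in> ?Alt" "c1 \<noteq> c2"
      from alternate_clauses_disjoint[OF induced this]
      show "(clause_vars c1 - M) \<inter> (clause_vars c2 - M) = {}" by blast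
    qed
  qed
  finally show ?thesis .
qed

text \<open>If no clause at an even position of the path has a common true literal, then on the
  unmarked variables of these clauses the pair never agrees with the values that satisfy
  them.\<close>

lemma card_extension_pairs_no_common_le:
  assumes A: "A \<subseteq> M" and \<sigma>1: "\<sigma>1 \<in> A \<rightarrow>\<^sub>E (UNIV :: bool set)" and \<sigma>0: "\<sigma>0 \<in> A \<rightarrow>\<^sub>E (UNIV :: bool set)"
    and path: "clause_path C cs" and induced: "induced_path cs"
  shows "real (card {pr \<in> sat_extensions V C A \<sigma>1 \<times> sat_extensions V C A \<sigma>0.
                       \<forall>c\<in>alternate_clauses cs. no_common_literal c (fst pr) (snd pr)})
     \<le> path_weight cs * card (sat_extensions V C A \<sigma>1) * card (sat_extensions V C A \<sigma>0)"
proof -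
  let ?E1 = "sat_extensions V C A \<sigma>1" and ?E0 = "sat_extensions V C A \<sigma>0"
  let ?Alt = "alternate_clauses cs"
  define Q where "Q = (\<Union>c\<in>?Alt. clause_vars c - M)"
  define s where "s u = (SOME b. \<exists>c\<in>?Alt. (u, b) \<in> c)" for u
  have "?Alt \<subseteq> C" using alternate_clauses_subset[of cs] path unfolding clause_path_def by blast
  hence QV: "Q \<subseteq> V - M" unfolding Q_def using clause_vars_subset by blast
  have "never_both_equal Q s (fst pr) (snd pr)"
    if "\<forall>c\<in>?Alt. no_common_literal c (fst pr) (snd pr)" for pr
    unfolding never_both_equal_def
  proof (intro ballI notI)
    fix u assume "u \<in> Q" and e: "fst pr u = s u \<and> snd pr u = s u"
    then obtain c b where "c \<in> ?Alt" "(u, b) \<in> c" unfolding Q_def clause_vars_def by auto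
    hence "\<exists>c\<in>?Alt. (u, b) \<in> c" by blast
    hence "\<exists>c\<in>?Alt. (u, s u) \<in> c" unfolding s_def by (rule someI)
    then obtain c' where "c' \<in> ?Alt" "(u, s u) \<in> c'" by blast
    thus False using that e unfolding no_common_literal_def by auto
  qed
  hence "card {pr \<in> ?E1 \<times> ?E0. \<forall>c\<in>?Alt. no_common_literal c (fst pr) (snd pr)}
      \<le> card {pr \<in> ?E1 \<times> ?E0. never_both_equal Q s (fst pr) (snd pr)}"
    using finite_V by (intro card_mono) (auto simp: finite_sat_extensions)
  hence "real (card {pr \<in> ?E1 \<times> ?E0. \<forall>c\<in>?Alt. no_common_literal c (fst pr) (snd pr)})
      \<le> rho ^ card Q * card ?E1 * card ?E0"
    using card_extension_pairs_never_both_le[OF A \<sigma>1 \<sigma>0 QV, of s] by linarith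
  also have "\<dots> \<le> path_weight cs * card ?E1 * card ?E0"
  proof -
    have "rho ^ card Q \<le> rho ^ (k\<beta> * ((length cs + 1) div 2))"
      using rho_nonneg rho_le card_unmarked_alternate_ge[OF path induced]
      unfolding Q_def by (intro power_decreasing) auto
    also have "\<dots> = path_weight cs" unfolding path_weight_def path_decay_def by (simp add: power_mult)
    finally show ?thesis by (intro mult_right_mono) auto
  qed
  finally show ?thesis .
qed


definition induced_paths_from :: "'v \<Rightarrow> 'v clause list set" where
  "induced_paths_from j = {cs. clause_path C cs \<and> induced_path cs \<and> j \<in> clause_vars (hd cs)}"

definition induced_paths :: "'v \<Rightarrow> 'v \<Rightarrow> 'v clause list set" where
  "induced_paths j w = {cs \<in> induced_paths_from j. w \<in> clause_vars (last cs)}"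

definition paths_from :: "'v \<Rightarrow> nat \<Rightarrow> 'v clause list set" where
  "paths_from j l = {cs. clause_path C cs \<and> length cs = l \<and> j \<in> clause_vars (hd cs)}"

lemma induced_path_length_le:
  assumes "clause_path C cs" "induced_path cs"
  shows "length cs \<le> 2 * card C"
proof -
  have "alternate_clauses cs \<subseteq> C"
    using alternate_clauses_subset[of cs] assms(1) unfolding clause_path_def by blast
  hence "card (alternate_clauses cs) \<le> card C" using finite_C by (simp add: card_mono)
  thus ?thesis using card_alternate_clauses_path[OF assms] by linarith
qed

lemma finite_induced_paths_from: "finite (induced_paths_from j)"
proof (rule finite_subset)
  show "induced_paths_from j \<subseteq> {xs. set xs \<subseteq> C \<and> length xs \<le> 2 * card C}"
    using induced_path_length_le unfolding induced_paths_from_def clause_path_def by blast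
  show "finite {xs. set xs \<subseteq> C \<and> length xs \<le> 2 * card C}"
    by (rule finite_lists_length_le[OF finite_C])
qed

lemma finite_induced_paths: "finite (induced_paths j w)"
  unfolding induced_paths_def using finite_induced_paths_from by simp

text \<open>Every pair whose disagreement component of \<open>j\<close> reaches \<open>w\<close> is witnessed by an induced
  path from \<open>j\<close> to \<open>w\<close> of clauses without common true literal.\<close>

lemma card_pairs_in_component_le:
  assumes wj: "w \<noteq> j" and A: "A \<subseteq> M"
    and \<sigma>1: "\<sigma>1 \<in> A \<rightarrow>\<^sub>E (UNIV :: bool set)" and \<sigma>0: "\<sigma>0 \<in> A \<rightarrow>\<^sub>E (UNIV :: bool set)"
  shows "real (card {pr \<in> sat_extensions V C A \<sigma>1 \<times> sat_extensions V C A \<sigma>0.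
                       w \<in> disagreement_component C j (fst pr) (snd pr)})
     \<le> (\<Sum>cs\<in>induced_paths j w. path_weight cs)
         * card (sat_extensions V C A \<sigma>1) * card (sat_extensions V C A \<sigma>0)"
proof -
  let ?E1 = "sat_extensions V C A \<sigma>1" and ?E0 = "sat_extensions V C A \<sigma>0"
  let ?F = "\<lambda>cs. {pr \<in> ?E1 \<times> ?E0. \<forall>c\<in>alternate_clauses cs. no_common_literal c (fst pr) (snd pr)}"
  have "{pr \<in> ?E1 \<times> ?E0. w \<in> disagreement_component C j (fst pr) (snd pr)} \<subseteq> (\<Union>cs\<in>induced_paths j w. ?F cs)"
  proof
    fix pr assume pr: "pr \<in> {pr \<in> ?E1 \<times> ?E0. w \<in> disagreement_component C j (fst pr) (snd pr)}"
    then obtain cs where cs: "clause_path C cs" "induced_path cs" "j \<in> clause_vars (hd cs)"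
      "w \<in> clause_vars (last cs)" "\<forall>c\<in>set cs. no_common_literal c (fst pr) (snd pr)"
      using induced_path_of_component[OF _ wj] by blast
    hence "pr \<in> ?F cs" using pr alternate_clauses_subset[of cs] by blast
    moreover have "cs \<in> induced_paths j w" unfolding induced_paths_def induced_paths_from_def using cs by blast
    ultimately show "pr \<in> (\<Union>cs\<in>induced_paths j w. ?F cs)" by blast
  qed
  hence "card {pr \<in> ?E1 \<times> ?E0. w \<in> disagreement_component C j (fst pr) (snd pr)}
      \<le> card (\<Union>cs\<in>induced_paths j w. ?F cs)"
    using finite_V by (intro card_mono finite_UN_I finite_induced_paths) (auto simp: finite_sat_extensions)
  also have "\<dots> \<le> (\<Sum>cs\<in>induced_paths j w. card (?F cs))" by (rule card_UN_le[OF finite_induced_paths])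
  finally have "real (card {pr \<in> ?E1 \<times> ?E0. w \<in> disagreement_component C j (fst pr) (snd pr)})
      \<le> (\<Sum>cs\<in>induced_paths j w. real (card (?F cs)))"
    by (simp only: of_nat_le_iff of_nat_sum[symmetric])
  also have "\<dots> \<le> (\<Sum>cs\<in>induced_paths j w. path_weight cs * card ?E1 * card ?E0)"
    by (rule sum_mono, rule card_extension_pairs_no_common_le[OF A \<sigma>1 \<sigma>0])
      (auto simp: induced_paths_def induced_paths_from_def)
  also have "\<dots> = (\<Sum>cs\<in>induced_paths j w. path_weight cs) * card ?E1 * card ?E0"
    by (simp add: sum_distrib_right)
  finally show ?thesis .
qed

lemma finite_paths_from: "finite (paths_from j l)"
proof (rule finite_subset)
  show "paths_from j l \<subseteq> {xs. set xs \<subseteq> C \<and> length xs = l}"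
    unfolding paths_from_def clause_path_def by auto
  show "finite {xs. set xs \<subseteq> C \<and> length xs = l}" by (rule finite_lists_length_eq[OF finite_C])
qed

lemma paths_from_Suc_subset:
  "paths_from j (Suc (Suc l))
     \<subseteq> (\<lambda>(cs, c). cs @ [c]) ` (SIGMA cs:paths_from j (Suc l). {c\<in>C. clause_vars c \<inter> clause_vars (last cs) \<noteq> {}})"
proof
  fix cs' assume "cs' \<in> paths_from j (Suc (Suc l))"
  hence cs': "clause_path C cs'" "length cs' = Suc (Suc l)" "j \<in> clause_vars (hd cs')"
    unfolding paths_from_def by auto
  define cs where "cs = butlast cs'"
  define c where "c = last cs'"
  have eq: "cs' = cs @ [c]" unfolding cs_def c_def using cs'(2) by (cases cs' rule: rev_cases) auto
  have ne: "cs \<noteq> []" unfolding cs_def using cs'(2) by (cases cs' rule: rev_cases) auto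
  have c: "clause_path C cs \<and> c \<in> C \<and> clause_vars (last cs) \<inter> clause_vars c \<noteq> {}"
    by (rule clause_path_snocD) (use cs'(1) eq ne in auto)
  moreover have "hd cs = hd cs'" "length cs = Suc l" unfolding eq using ne cs'(2) eq by auto
  ultimately have "(cs, c) \<in> (SIGMA cs:paths_from j (Suc l). {c\<in>C. clause_vars c \<inter> clause_vars (last cs) \<noteq> {}})"
    using cs'(3) unfolding paths_from_def by auto
  thus "cs' \<in> (\<lambda>(cs, c). cs @ [c]) ` (SIGMA cs:paths_from j (Suc l). {c\<in>C. clause_vars c \<inter> clause_vars (last cs) \<noteq> {}})"
    unfolding eq by force
qed

lemma card_paths_from_le: "j \<in> V \<Longrightarrow> card (paths_from j (Suc l)) \<le> d * (k * d) ^ l"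
proof (induction l)
  case 0
  have "paths_from j (Suc 0) \<subseteq> (\<lambda>c. [c]) ` {c\<in>C. j \<in> clause_vars c}"
  proof
    fix cs assume "cs \<in> paths_from j (Suc 0)"
    hence cs: "clause_path C cs" "length cs = 1" "j \<in> clause_vars (hd cs)" unfolding paths_from_def by auto
    then obtain c where "cs = [c]" by (metis length_0_conv length_Suc_conv One_nat_def)
    thus "cs \<in> (\<lambda>c. [c]) ` {c\<in>C. j \<in> clause_vars c}" using cs unfolding clause_path_def by auto
  qed
  hence "card (paths_from j (Suc 0)) \<le> card ((\<lambda>c. [c]) ` {c\<in>C. j \<in> clause_vars c})"
    using finite_C by (intro card_mono) auto
  also have "\<dots> \<le> card {c\<in>C. j \<in> clause_vars c}" by (rule card_image_le) (use finite_C in auto)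
  also have "\<dots> \<le> d" by (rule card_clauses_of_var[OF 0])
  finally show ?case by simp
next
  case (Suc l)
  let ?N = "\<lambda>cs. {c\<in>C. clause_vars c \<inter> clause_vars (last cs) \<noteq> {}}"
  have fin: "finite (SIGMA cs:paths_from j (Suc l). ?N cs)"
    using finite_C by (intro finite_SigmaI finite_paths_from) auto
  have "card (paths_from j (Suc (Suc l))) \<le> card ((\<lambda>(cs, c). cs @ [c]) ` (SIGMA cs:paths_from j (Suc l). ?N cs))"
    using fin by (intro card_mono finite_imageI paths_from_Suc_subset)
  also have "\<dots> \<le> card (SIGMA cs:paths_from j (Suc l). ?N cs)" using fin by (rule card_image_le)
  also have "\<dots> = (\<Sum>cs\<in>paths_from j (Suc l). card (?N cs))"
    by (rule card_SigmaI) (use finite_paths_from finite_C in auto)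
  also have "\<dots> \<le> (\<Sum>cs\<in>paths_from j (Suc l). d * k)"
  proof (rule sum_mono)
    fix cs assume "cs \<in> paths_from j (Suc l)"
    hence "last cs \<in> C" unfolding paths_from_def clause_path_def by auto
    thus "card (?N cs) \<le> d * k" by (rule card_clauses_meeting_clause)
  qed
  also have "\<dots> \<le> d * (k * d) ^ l * (d * k)" using Suc by simp
  also have "\<dots> = d * (k * d) ^ Suc l" by (simp add: mult.commute mult.left_commute)
  finally show ?case .
qed

lemma induced_paths_of_length_le:
  assumes j: "j \<in> V" and l: "1 \<le> l"
  shows "k * card {cs \<in> induced_paths_from j. length cs = l} * path_decay ^ ((l + 1) div 2) \<le> (1/4) ^ l"
proof -
  obtain l' where l': "l = Suc l'" using l by (cases l) auto
  have "{cs \<in> induced_paths_from j. length cs = l} \<subseteq> paths_from j l"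
    unfolding induced_paths_from_def paths_from_def by auto
  hence "card {cs \<in> induced_paths_from j. length cs = l} \<le> card (paths_from j l)"
    using finite_paths_from by (rule card_mono[rotated])
  also have "\<dots> \<le> d * (k * d) ^ l'" unfolding l' by (rule card_paths_from_le[OF j])
  finally have "real (k * card {cs \<in> induced_paths_from j. length cs = l}) \<le> real (k * d * (k * d) ^ l')"
    by (simp only: of_nat_le_iff mult.assoc mult_le_mono2)
  hence "k * card {cs \<in> induced_paths_from j. length cs = l} * path_decay ^ ((l + 1) div 2)
      \<le> real (k * d) ^ l * path_decay ^ ((l + 1) div 2)"
    using path_decay_nonneg unfolding l' by (intro mult_right_mono) (auto simp: mult_ac)
  also have "\<dots> \<le> (1/4) ^ l" by (rule kd_pow_path_decay_le[OF l])
  finally show ?thesis .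
qed

lemma induced_path_weight_sum_le:
  assumes j: "j \<in> V"
  shows "(\<Sum>v\<in>M - {j}. \<Sum>cs\<in>induced_paths j v. path_weight cs) \<le> 1/3"
proof -
  let ?P = "induced_paths_from j" and ?L = "{1..2 * card C}"
  have finM: "finite (M - {j})" using finite_M by simp
  have "(\<Sum>v\<in>M - {j}. \<Sum>cs\<in>induced_paths j v. path_weight cs)
      = (\<Sum>cs\<in>?P. \<Sum>v\<in>{v \<in> M - {j}. v \<in> clause_vars (last cs)}. path_weight cs)"
    unfolding induced_paths_def by (rule sum.swap_restrict[OF finM finite_induced_paths_from])
  also have "\<dots> \<le> (\<Sum>cs\<in>?P. k * path_weight cs)"
  proof (rule sum_mono)
    fix cs assume "cs \<in> ?P"
    hence last: "last cs \<in> C" unfolding induced_paths_from_def clause_path_def by auto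
    have "card {v \<in> M - {j}. v \<in> clause_vars (last cs)} \<le> card (clause_vars (last cs))"
      using clause_vars_subset[OF last] finite_V by (intro card_mono) (auto intro: finite_subset)
    thus "(\<Sum>v\<in>{v \<in> M - {j}. v \<in> clause_vars (last cs)}. path_weight cs) \<le> k * path_weight cs"
      using card_clause_vars[OF last] path_decay_nonneg
      by (simp add: path_weight_def mult_right_mono)
  qed
  also have "\<dots> = (\<Sum>l\<in>?L. \<Sum>cs\<in>{cs \<in> ?P. length cs = l}. k * path_weight cs)"
  proof (rule sum.group[symmetric, OF finite_induced_paths_from])
    show "length ` ?P \<subseteq> ?L"
      using induced_path_length_le unfolding induced_paths_from_def clause_path_def
      by (auto simp: Suc_le_eq)
  qed simp
  also have "\<dots> = (\<Sum>l\<in>?L. k * card {cs \<in> ?P. length cs = l} * path_decay ^ ((l + 1) div 2))"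
    unfolding path_weight_def by (intro sum.cong) simp_all
  also have "\<dots> \<le> (\<Sum>l\<in>?L. (1/4) ^ l)"
    using induced_paths_of_length_le[OF j] by (intro sum_mono) auto
  also have "\<dots> \<le> 1/3" unfolding sum_quarter_powers by simp
  finally show ?thesis .
qed

end

section \<open>Mixing from contraction of the Lipschitz constant\<close>

definition flip :: "'a \<Rightarrow> ('a \<Rightarrow> bool) \<Rightarrow> 'a \<Rightarrow> bool" where
  "flip j X = X(j := \<not> X j)"

definition lipschitz_const :: "'a set \<Rightarrow> (('a \<Rightarrow> bool) \<Rightarrow> real) \<Rightarrow> real" where
  "lipschitz_const M f = Max (insert 0 ((\<lambda>(X, j). \<bar>f X - f (flip j X)\<bar>) ` (cube M \<times> M)))"

definition kernel_apply :: "'s set \<Rightarrow> ('s \<Rightarrow> 's \<Rightarrow> real) \<Rightarrow> ('s \<Rightarrow> real) \<Rightarrow> 's \<Rightarrow> real" where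
  "kernel_apply S P f x = (\<Sum>y\<in>S. P x y * f y)"

lemma flip_in_cube: "X \<in> cube M \<Longrightarrow> j \<in> M \<Longrightarrow> flip j X \<in> cube M"
  unfolding flip_def by (rule fun_upd_in_cube)

lemma lipschitz_const_ge:
  assumes "finite M" "X \<in> cube M" "j \<in> M"
  shows "\<bar>f X - f (flip j X)\<bar> \<le> lipschitz_const M f"
  unfolding lipschitz_const_def by (rule Max_ge) (use assms finite_cube in auto)

lemma lipschitz_const_nonneg: "finite M \<Longrightarrow> 0 \<le> lipschitz_const M f"
  unfolding lipschitz_const_def by (rule Max_ge) (auto simp: finite_cube)

lemma lipschitz_const_le:
  assumes "finite M" "0 \<le> c" "\<And>X j. X \<in> cube M \<Longrightarrow> j \<in> M \<Longrightarrow> \<bar>f X - f (flip j X)\<bar> \<le> c"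
  shows "lipschitz_const M f \<le> c"
proof -
  have "finite ((\<lambda>(X, j). \<bar>f X - f (flip j X)\<bar>) ` (cube M \<times> M))"
    using assms(1) finite_cube by blast
  thus ?thesis unfolding lipschitz_const_def by (subst Max_le_iff) (use assms in auto)
qed

lemma lipschitz_const_cong:
  assumes "\<And>X. X \<in> cube M \<Longrightarrow> f X = g X"
  shows "lipschitz_const M f = lipschitz_const M g"
proof -
  have "(\<lambda>(X, j). \<bar>f X - f (flip j X)\<bar>) ` (cube M \<times> M) = (\<lambda>(X, j). \<bar>g X - g (flip j X)\<bar>) ` (cube M \<times> M)"
    by (rule image_cong) (auto simp: assms flip_in_cube)
  thus ?thesis unfolding lipschitz_const_def by simp
qed

lemma abs_diff_le_lipschitz_const:
  assumes finM: "finite M" and S: "finite S"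
  shows "X \<in> cube M \<Longrightarrow> Y \<in> cube M \<Longrightarrow> \<forall>u\<in>M - S. X u = Y u \<Longrightarrow>
    \<bar>f X - f Y\<bar> \<le> card S * lipschitz_const M f"
  using S
proof (induction S arbitrary: X rule: finite_induct)
  case empty
  hence "X = Y" unfolding cube_def by (auto simp: fun_eq_iff PiE_def extensional_def)
  thus ?case by simp
next
  case (insert a S)
  let ?L = "lipschitz_const M f"
  show ?case
  proof (cases "a \<in> M \<and> X a \<noteq> Y a")
    case False
    hence "\<forall>u\<in>M - S. X u = Y u" using insert.prems(3) by auto
    hence "\<bar>f X - f Y\<bar> \<le> card S * ?L" using insert.IH insert.prems by blast
    also have "\<dots> \<le> card (insert a S) * ?L"
      using insert.hyps lipschitz_const_nonneg[OF finM, of f] by (intro mult_right_mono) auto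
    finally show ?thesis .
  next
    case True
    define Z where "Z = flip a X"
    have Z: "Z \<in> cube M" unfolding Z_def using insert.prems(1) True by (simp add: flip_in_cube)
    have "\<forall>u\<in>M - S. Z u = Y u" using insert.prems(3) True unfolding Z_def flip_def by auto
    hence "\<bar>f Z - f Y\<bar> \<le> card S * ?L" using insert.IH[OF Z insert.prems(2)] by blast
    moreover have "\<bar>f X - f Z\<bar> \<le> ?L"
      unfolding Z_def using lipschitz_const_ge[OF finM insert.prems(1)] True by blast
    ultimately have "\<bar>f X - f Y\<bar> \<le> ?L + card S * ?L" by linarith
    also have "\<dots> = card (insert a S) * ?L" using insert.hyps by (simp add: algebra_simps)
    finally show ?thesis .
  qed
qed

lemma kernel_apply_kernel_pow_0:
  assumes "finite S" "x \<in> S"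
  shows "kernel_apply S (kernel_pow S P 0) f x = f x"
proof -
  have "kernel_apply S (kernel_pow S P 0) f x = (\<Sum>y\<in>S. if x = y then f y else 0)"
    unfolding kernel_apply_def by (rule sum.cong) auto
  thus ?thesis using assms by simp
qed

lemma kernel_apply_kernel_pow_Suc:
  "kernel_apply S (kernel_pow S P (Suc t)) f = kernel_apply S (kernel_pow S P t) (kernel_apply S P f)"
proof
  fix x
  let ?k = "kernel_pow S P t"
  have "kernel_apply S (kernel_pow S P (Suc t)) f x = (\<Sum>y\<in>S. \<Sum>z\<in>S. ?k x z * P z y * f y)"
    unfolding kernel_apply_def by (simp add: sum_distrib_right)
  also have "\<dots> = (\<Sum>z\<in>S. \<Sum>y\<in>S. ?k x z * P z y * f y)" by (rule sum.swap)
  also have "\<dots> = kernel_apply S ?k (kernel_apply S P f) x"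
    unfolding kernel_apply_def by (simp add: sum_distrib_left mult.assoc)
  finally show "kernel_apply S (kernel_pow S P (Suc t)) f x = kernel_apply S ?k (kernel_apply S P f) x" .
qed

text \<open>A kernel on the cube \<open>{0,1}^M\<close> that contracts the Lipschitz constant by \<open>r\<close> moves the
  expectation of any \<open>[0,1]\<close>-valued function by at most \<open>|M| r^t\<close> after \<open>t\<close> steps, since such a
  function varies by at most \<open>|M|\<close> times its Lipschitz constant. Taking indicator functions gives
  the bound on the total variation distance to a stationary distribution.\<close>

locale lipschitz_contraction =
  fixes M :: "'a set" and P :: "('a \<Rightarrow> bool) \<Rightarrow> ('a \<Rightarrow> bool) \<Rightarrow> real" and \<pi> :: "('a \<Rightarrow> bool) \<Rightarrow> real"
    and r :: real
  assumes finite_M: "finite M"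
    and \<pi>_nonneg: "\<And>X. X \<in> cube M \<Longrightarrow> 0 \<le> \<pi> X"
    and \<pi>_sum: "(\<Sum>X\<in>cube M. \<pi> X) = 1"
    and stationary: "\<And>Y. Y \<in> cube M \<Longrightarrow> (\<Sum>X\<in>cube M. \<pi> X * P X Y) = \<pi> Y"
    and contraction: "\<And>f. lipschitz_const M (kernel_apply (cube M) P f) \<le> r * lipschitz_const M f"
    and r_nonneg: "0 \<le> r"
begin

abbreviation step :: "nat \<Rightarrow> (('a \<Rightarrow> bool) \<Rightarrow> real) \<Rightarrow> ('a \<Rightarrow> bool) \<Rightarrow> real" where
  "step t \<equiv> kernel_apply (cube M) (kernel_pow (cube M) P t)"

lemma lipschitz_const_step: "lipschitz_const M (step t f) \<le> r ^ t * lipschitz_const M f"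
proof (induction t arbitrary: f)
  case 0
  have "lipschitz_const M (step 0 f) = lipschitz_const M f"
    by (rule lipschitz_const_cong) (rule kernel_apply_kernel_pow_0[OF finite_cube[OF finite_M]])
  thus ?case by (simp del: kernel_pow.simps)
next
  case (Suc t)
  have "lipschitz_const M (step (Suc t) f) = lipschitz_const M (step t (kernel_apply (cube M) P f))"
    by (simp only: kernel_apply_kernel_pow_Suc)
  also have "\<dots> \<le> r ^ t * lipschitz_const M (kernel_apply (cube M) P f)" by (rule Suc.IH)
  also have "\<dots> \<le> r ^ t * (r * lipschitz_const M f)"
    using contraction r_nonneg by (intro mult_left_mono) auto
  finally show ?case by (simp only: power_Suc mult_ac)
qed

lemma expectation_step: "(\<Sum>X\<in>cube M. \<pi> X * step t f X) = (\<Sum>X\<in>cube M. \<pi> X * f X)"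
proof (induction t arbitrary: f)
  case 0 show ?case
    by (rule sum.cong[OF refl]) (simp only: kernel_apply_kernel_pow_0[OF finite_cube[OF finite_M]])
next
  case (Suc t)
  have "(\<Sum>X\<in>cube M. \<pi> X * step (Suc t) f X) = (\<Sum>X\<in>cube M. \<pi> X * kernel_apply (cube M) P f X)"
    by (simp only: kernel_apply_kernel_pow_Suc Suc.IH)
  also have "\<dots> = (\<Sum>X\<in>cube M. \<Sum>Y\<in>cube M. \<pi> X * P X Y * f Y)"
    unfolding kernel_apply_def by (simp add: sum_distrib_left mult.assoc)
  also have "\<dots> = (\<Sum>Y\<in>cube M. \<Sum>X\<in>cube M. \<pi> X * P X Y * f Y)"
    by (rule sum.swap)
  also have "\<dots> = (\<Sum>Y\<in>cube M. \<pi> Y * f Y)"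
    by (rule sum.cong) (simp_all add: sum_distrib_right[symmetric] stationary)
  finally show ?case .
qed

lemma step_deviation_le:
  assumes X0: "X0 \<in> cube M" and g: "\<And>Y. 0 \<le> g Y" "\<And>Y. g Y \<le> 1"
  shows "\<bar>step t g X0 - (\<Sum>X\<in>cube M. \<pi> X * g X)\<bar> \<le> card M * r ^ t"
proof -
  have "lipschitz_const M g \<le> 1"
  proof (rule lipschitz_const_le[OF finite_M])
    fix X j show "\<bar>g X - g (flip j X)\<bar> \<le> 1" using g[of X] g[of "flip j X"] by (simp add: abs_le_iff)
  qed simp
  hence "r ^ t * lipschitz_const M g \<le> r ^ t" using r_nonneg by (simp add: mult_left_le)
  hence lip: "lipschitz_const M (step t g) \<le> r ^ t"
    using lipschitz_const_step[of t g] by linarith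
  have "step t g X0 - (\<Sum>X\<in>cube M. \<pi> X * g X) = (\<Sum>X\<in>cube M. \<pi> X * (step t g X0 - step t g X))"
    using \<pi>_sum expectation_step[of t g]
    by (simp add: right_diff_distrib sum_subtractf sum_distrib_right[symmetric])
  also have "\<bar>\<dots>\<bar> \<le> (\<Sum>X\<in>cube M. \<pi> X * (card M * r ^ t))"
  proof (rule order_trans[OF sum_abs sum_mono])
    fix X assume X: "X \<in> cube M"
    have "\<bar>step t g X0 - step t g X\<bar> \<le> card M * lipschitz_const M (step t g)"
      using abs_diff_le_lipschitz_const[OF finite_M finite_M X0 X] by simp
    also have "\<dots> \<le> card M * r ^ t" using lip by (intro mult_left_mono) auto
    finally show "\<bar>\<pi> X * (step t g X0 - step t g X)\<bar> \<le> \<pi> X * (card M * r ^ t)"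
      using \<pi>_nonneg[OF X] by (simp add: abs_mult mult_left_mono)
  qed
  also have "\<dots> = card M * r ^ t" using \<pi>_sum by (simp add: sum_distrib_right[symmetric])
  finally show ?thesis .
qed

lemma dtv_kernel_pow_le:
  assumes X0: "X0 \<in> cube M"
  shows "dtv (cube M) (kernel_pow (cube M) P t X0) \<pi> \<le> card M * r ^ t"
proof -
  let ?p = "kernel_pow (cube M) P t X0"
  define g where "g Y = (if \<pi> Y \<le> ?p Y then 1 else 0 :: real)" for Y
  have step_eq: "step t h X0 = (\<Sum>Y\<in>cube M. ?p Y * h Y)" for h unfolding kernel_apply_def ..
  have "\<bar>?p Y - \<pi> Y\<bar> = (?p Y * g Y - \<pi> Y * g Y) - (?p Y * (1 - g Y) - \<pi> Y * (1 - g Y))" for Y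
    unfolding g_def by (auto simp: algebra_simps)
  hence "(\<Sum>Y\<in>cube M. \<bar>?p Y - \<pi> Y\<bar>)
      = (step t g X0 - (\<Sum>X\<in>cube M. \<pi> X * g X))
        - (step t (\<lambda>Y. 1 - g Y) X0 - (\<Sum>X\<in>cube M. \<pi> X * (1 - g X)))"
    unfolding step_eq by (simp add: sum_subtractf)
  also have "\<dots> \<le> 2 * (card M * r ^ t)"
  proof -
    have "\<bar>step t g X0 - (\<Sum>X\<in>cube M. \<pi> X * g X)\<bar> \<le> card M * r ^ t"
      by (rule step_deviation_le[OF X0]) (simp_all add: g_def)
    moreover have "\<bar>step t (\<lambda>Y. 1 - g Y) X0 - (\<Sum>X\<in>cube M. \<pi> X * (1 - g X))\<bar> \<le> card M * r ^ t"
      by (rule step_deviation_le[OF X0]) (simp_all add: g_def)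
    ultimately show ?thesis unfolding abs_le_iff by linarith
  qed
  finally show ?thesis unfolding dtv_def by simp
qed

end

section \<open>Glauber dynamics on the marked variables\<close>

lemma cube_agree_except:
  assumes X: "X \<in> cube M" and v: "v \<in> M"
  shows "{Y \<in> cube M. restrict Y (M - {v}) = restrict X (M - {v})} = {X(v := True), X(v := False)}"
proof
  show "{X(v := True), X(v := False)} \<subseteq> {Y \<in> cube M. restrict Y (M - {v}) = restrict X (M - {v})}"
    using fun_upd_in_cube[OF X v] by (auto simp: restrict_def fun_eq_iff)
  show "{Y \<in> cube M. restrict Y (M - {v}) = restrict X (M - {v})} \<subseteq> {X(v := True), X(v := False)}"
  proof
    fix Y assume Y: "Y \<in> {Y \<in> cube M. restrict Y (M - {v}) = restrict X (M - {v})}"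
    have "Y u = (X(v := Y v)) u" for u
    proof (cases "u \<in> M - {v}")
      case True
      hence "restrict Y (M - {v}) u = restrict X (M - {v}) u" using Y by simp
      thus ?thesis using True by simp
    next
      case False
      thus ?thesis using X Y unfolding cube_def by (auto simp: PiE_def extensional_def)
    qed
    hence "Y = X(v := Y v)" by blast
    thus "Y \<in> {X(v := True), X(v := False)}" by (cases "Y v") auto
  qed
qed

lemma sum_cube_agree_except:
  assumes M: "finite M" and X: "X \<in> cube M" and v: "v \<in> M"
  shows "(\<Sum>Y\<in>cube M. if restrict Y (M - {v}) = restrict X (M - {v}) then g Y else 0)
    = g (X(v := True)) + g (X(v := False))"
proof -
  have "(\<Sum>Y\<in>cube M. if restrict Y (M - {v}) = restrict X (M - {v}) then g Y else 0)
      = (\<Sum>Y\<in>{Y \<in> cube M. restrict Y (M - {v}) = restrict X (M - {v})}. g Y)"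
    using M by (simp add: sum.inter_filter finite_cube)
  also have "\<dots> = g (X(v := True)) + g (X(v := False))"
  proof -
    have "X(v := True) \<noteq> X(v := False)" by (metis fun_upd_same)
    thus ?thesis unfolding cube_agree_except[OF X v] by simp
  qed
  finally show ?thesis .
qed

lemma restrict_eq_fun_upd_iff:
  assumes X: "X \<in> cube M" and v: "v \<in> M"
  shows "restrict \<omega> M = X(v := b) \<longleftrightarrow> restrict \<omega> (M - {v}) = restrict X (M - {v}) \<and> \<omega> v = b"
proof
  assume e: "restrict \<omega> M = X(v := b)"
  have "restrict \<omega> (M - {v}) u = restrict X (M - {v}) u" for u
    using fun_cong[OF e, of u] by (cases "u \<in> M - {v}") auto
  moreover have "\<omega> v = b" using fun_cong[OF e, of v] v by simp
  ultimately show "restrict \<omega> (M - {v}) = restrict X (M - {v}) \<and> \<omega> v = b" by blast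
next
  assume a: "restrict \<omega> (M - {v}) = restrict X (M - {v}) \<and> \<omega> v = b"
  show "restrict \<omega> M = X(v := b)"
  proof
    fix u show "restrict \<omega> M u = (X(v := b)) u"
    proof (cases "u \<in> M - {v}")
      case True
      have "restrict \<omega> (M - {v}) u = restrict X (M - {v}) u" using a by simp
      thus ?thesis using True by simp
    next
      case u: False
      show ?thesis
      proof (cases "u = v")
        case True thus ?thesis using a v by simp
      next
        case False
        hence "u \<notin> M" using u by blast
        thus ?thesis using X False unfolding cube_def by (simp add: PiE_def extensional_def)
      qed
    qed
  qed
qed

context glauber_formula
begin

definition pinned :: "'v \<Rightarrow> ('v \<Rightarrow> bool) \<Rightarrow> ('v \<Rightarrow> bool) set" where
  "pinned v X = sat_extensions V C (M - {v}) (restrict X (M - {v}))"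

definition heat_bath :: "'v \<Rightarrow> ('v \<Rightarrow> bool) \<Rightarrow> bool \<Rightarrow> real" where
  "heat_bath v X b = cond_marginal V C {v} (restrict (X(v := b)) {v}) (M - {v}) (restrict X (M - {v}))"

definition resample_mean :: "(('v \<Rightarrow> bool) \<Rightarrow> real) \<Rightarrow> ('v \<Rightarrow> bool) \<Rightarrow> 'v \<Rightarrow> real" where
  "resample_mean f X v = heat_bath v X True * f (X(v := True)) + heat_bath v X False * f (X(v := False))"

lemma card_sat_assignments_pos: "0 < card (sat_assignments V C)"
proof -
  have "sat_extensions V C {} (\<lambda>_. undefined) = sat_assignments V C"
    unfolding sat_extensions_def by auto
  thus ?thesis using card_sat_extensions_pos[of "{}" "\<lambda>_. undefined"] by simp
qed

lemma card_pinned_pos: "v \<in> M \<Longrightarrow> 0 < card (pinned v X)"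
  unfolding pinned_def by (rule card_sat_extensions_pos) auto

lemma card_pinned_split:
  "card {\<omega> \<in> pinned v X. \<omega> v = True} + card {\<omega> \<in> pinned v X. \<omega> v = False} = card (pinned v X)"
proof -
  have "pinned v X = {\<omega> \<in> pinned v X. \<omega> v = True} \<union> {\<omega> \<in> pinned v X. \<omega> v = False}" by auto
  moreover have "finite (pinned v X)" unfolding pinned_def using finite_V by (rule finite_sat_extensions)
  ultimately show ?thesis by (metis (no_types, lifting) card_Un_disjoint disjoint_iff finite_Un mem_Collect_eq)
qed

lemma heat_bath_eq: "heat_bath v X b = card {\<omega> \<in> pinned v X. \<omega> v = b} / card (pinned v X)"
proof -
  have "{\<omega> \<in> sat_assignments V C. restrict \<omega> {v} = restrict (X(v := b)) {v}
                                \<and> restrict \<omega> (M - {v}) = restrict X (M - {v})}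
      = {\<omega> \<in> pinned v X. \<omega> v = b}"
    unfolding pinned_def sat_extensions_def by (auto simp: restrict_def fun_eq_iff)
  moreover have "{\<omega> \<in> sat_assignments V C. restrict \<omega> (M - {v}) = restrict X (M - {v})} = pinned v X"
    unfolding pinned_def sat_extensions_def ..
  ultimately show ?thesis unfolding heat_bath_def cond_marginal_def by simp
qed

lemma heat_bath_nonneg: "0 \<le> heat_bath v X b"
  unfolding heat_bath_eq by simp

lemma heat_bath_sum: "v \<in> M \<Longrightarrow> heat_bath v X True + heat_bath v X False = 1"
  unfolding heat_bath_eq using card_pinned_pos[of v X] card_pinned_split[of v X]
  by (simp add: field_simps flip: of_nat_add)

lemma heat_bath_le_1: "v \<in> M \<Longrightarrow> heat_bath v X b \<le> 1"
  using heat_bath_sum[of v X] heat_bath_nonneg[of v X True] heat_bath_nonneg[of v X False]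
  by (cases b) auto

lemma heat_bath_cong: "restrict X (M - {v}) = restrict X' (M - {v}) \<Longrightarrow> heat_bath v X b = heat_bath v X' b"
  unfolding heat_bath_eq pinned_def by simp

lemma marginal_fun_upd:
  assumes X: "X \<in> cube M" and v: "v \<in> M"
  shows "marginal V C M (X(v := b)) = card {\<omega> \<in> pinned v X. \<omega> v = b} / card (sat_assignments V C)"
  unfolding marginal_def pinned_def sat_extensions_def restrict_eq_fun_upd_iff[OF X v]
  by (simp add: conj_assoc)

lemma marginal_nonneg: "0 \<le> marginal V C M X"
  unfolding marginal_def by simp

lemma marginal_sum: "(\<Sum>X\<in>cube M. marginal V C M X) = 1"
proof -
  have "(\<Sum>X\<in>cube M. real (card {\<omega> \<in> sat_assignments V C. restrict \<omega> M = X}))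
      = (\<Sum>X\<in>cube M. \<Sum>\<omega>\<in>{\<omega> \<in> sat_assignments V C. restrict \<omega> M = X}. 1)"
    by simp
  also have "\<dots> = (\<Sum>\<omega>\<in>sat_assignments V C. 1)"
    by (rule sum.group) (auto simp: finite_sat_assignments finite_V finite_M cube_def finite_PiE)
  finally show ?thesis
    using card_sat_assignments_pos unfolding marginal_def by (simp add: sum_divide_distrib[symmetric])
qed

lemma glauber_eq:
  assumes X: "X \<in> cube M" and Y: "Y \<in> cube M"
  shows "glauber V C M X Y = (1 / real (card M)) *
     (\<Sum>v\<in>M. if restrict Y (M - {v}) = restrict X (M - {v}) then heat_bath v X (Y v) else 0)"
proof -
  have "cond_marginal V C {v} (restrict Y {v}) (M - {v}) (restrict X (M - {v})) = heat_bath v X (Y v)" for v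
  proof -
    have "restrict Y {v} = restrict (X(v := Y v)) {v}" by (auto simp: restrict_def fun_eq_iff)
    thus ?thesis unfolding heat_bath_def by simp
  qed
  hence "(\<Sum>v\<in>M. if restrict Y (M - {v}) = restrict X (M - {v})
                 then cond_marginal V C {v} (restrict Y {v}) (M - {v}) (restrict X (M - {v})) else 0)
      = (\<Sum>v\<in>M. if restrict Y (M - {v}) = restrict X (M - {v}) then heat_bath v X (Y v) else 0)"
    by (intro sum.cong) auto
  moreover have "X \<in> M \<rightarrow>\<^sub>E UNIV" "Y \<in> M \<rightarrow>\<^sub>E UNIV" using X Y unfolding cube_def by auto
  ultimately show ?thesis unfolding glauber_def by simp
qed

lemma kernel_apply_glauber:
  assumes X: "X \<in> cube M"
  shows "kernel_apply (cube M) (glauber V C M) f X = (1 / real (card M)) * (\<Sum>v\<in>M. resample_mean f X v)"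
proof -
  let ?c = "\<lambda>Y v. restrict Y (M - {v}) = restrict X (M - {v})"
  have "kernel_apply (cube M) (glauber V C M) f X
      = (\<Sum>Y\<in>cube M. (1 / real (card M)) * (\<Sum>v\<in>M. (if ?c Y v then heat_bath v X (Y v) else 0)) * f Y)"
    unfolding kernel_apply_def by (rule sum.cong) (auto simp: glauber_eq[OF X])
  also have "\<dots> = (1 / real (card M)) * (\<Sum>Y\<in>cube M. \<Sum>v\<in>M. (if ?c Y v then heat_bath v X (Y v) * f Y else 0))"
    by (simp add: sum_distrib_left sum_distrib_right mult.assoc if_distrib[of "\<lambda>x. x * _"] cong: if_cong)
  also have "\<dots> = (1 / real (card M)) * (\<Sum>v\<in>M. \<Sum>Y\<in>cube M. (if ?c Y v then heat_bath v X (Y v) * f Y else 0))"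
    by (subst sum.swap) (rule refl)
  also have "\<dots> = (1 / real (card M)) * (\<Sum>v\<in>M. resample_mean f X v)"
  proof -
    have "(\<Sum>Y\<in>cube M. if ?c Y v then heat_bath v X (Y v) * f Y else 0) = resample_mean f X v"
      if "v \<in> M" for v
      unfolding resample_mean_def by (subst sum_cube_agree_except[OF finite_M X that]) simp
    thus ?thesis by simp
  qed
  finally show ?thesis .
qed

text \<open>Both points that agree with \<open>Y\<close> off \<open>v\<close> have the heat-bath distribution of \<open>Y\<close> at \<open>v\<close>,
  and their marginals add up to the probability of the pinned set.\<close>

lemma marginal_resample:
  assumes Y: "Y \<in> cube M" and v: "v \<in> M"
  shows "(\<Sum>X\<in>cube M. marginal V C M X * (if restrict Y (M - {v}) = restrict X (M - {v})
                                          then heat_bath v X (Y v) else 0))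
    = marginal V C M Y"
proof -
  let ?Z = "real (card (sat_assignments V C))" and ?N = "\<lambda>b. real (card {\<omega> \<in> pinned v Y. \<omega> v = b})"
  have same: "heat_bath v (Y(v := b)) (Y v) = heat_bath v Y (Y v)" for b
    by (rule heat_bath_cong) (auto simp: restrict_def fun_eq_iff)
  have "(\<Sum>X\<in>cube M. marginal V C M X * (if restrict Y (M - {v}) = restrict X (M - {v})
                                          then heat_bath v X (Y v) else 0))
      = (\<Sum>X\<in>cube M. if restrict X (M - {v}) = restrict Y (M - {v})
                       then marginal V C M X * heat_bath v X (Y v) else 0)"
    by (rule sum.cong) auto
  also have "\<dots> = (marginal V C M (Y(v := True)) + marginal V C M (Y(v := False))) * heat_bath v Y (Y v)"
    unfolding sum_cube_agree_except[OF finite_M Y v] same by (simp add: algebra_simps)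
  also have "\<dots> = (?N True + ?N False) / ?Z * (?N (Y v) / card (pinned v Y))"
    unfolding marginal_fun_upd[OF Y v] heat_bath_eq by (simp add: add_divide_distrib)
  also have "\<dots> = ?N (Y v) / ?Z"
    using card_pinned_split[of v Y] card_pinned_pos[OF v, of Y] by (simp flip: of_nat_add)
  also have "\<dots> = marginal V C M Y"
    using marginal_fun_upd[OF Y v, of "Y v"] by simp
  finally show ?thesis .
qed

lemma glauber_stationary:
  assumes Y: "Y \<in> cube M" and M: "M \<noteq> {}"
  shows "(\<Sum>X\<in>cube M. marginal V C M X * glauber V C M X Y) = marginal V C M Y"
proof -
  let ?c = "\<lambda>X v. restrict Y (M - {v}) = restrict X (M - {v})"
  have "(\<Sum>X\<in>cube M. marginal V C M X * glauber V C M X Y)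
      = (1 / real (card M)) * (\<Sum>X\<in>cube M. \<Sum>v\<in>M. marginal V C M X * (if ?c X v then heat_bath v X (Y v) else 0))"
    by (simp add: glauber_eq[OF _ Y] sum_distrib_left mult_ac)
  also have "\<dots> = (1 / real (card M)) * (\<Sum>v\<in>M. \<Sum>X\<in>cube M. marginal V C M X * (if ?c X v then heat_bath v X (Y v) else 0))"
    by (subst sum.swap) (rule refl)
  also have "\<dots> = (1 / real (card M)) * (\<Sum>v\<in>M. marginal V C M Y)"
    using marginal_resample[OF Y] by simp
  also have "\<dots> = marginal V C M Y" using M finite_M by simp
  finally show ?thesis .
qed


lemma heat_bath_flip_diff_le:
  assumes X: "X \<in> cube M" and j: "j \<in> M" and v: "v \<in> M" and vj: "v \<noteq> j"
  shows "\<bar>heat_bath v X True - heat_bath v (flip j X) True\<bar> \<le> (\<Sum>cs\<in>induced_paths j v. path_weight cs)"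
proof -
  define A where "A = M - {v}"
  let ?E1 = "pinned v X" and ?E0 = "pinned v (flip j X)"
  let ?S = "\<Sum>cs\<in>induced_paths j v. path_weight cs"
  have E: "?E1 = sat_extensions V C A (restrict X A)" "?E0 = sat_extensions V C A (restrict (flip j X) A)"
    unfolding pinned_def A_def by simp_all
  have "\<bar>real (card ?E0 * card {\<omega>\<in>?E1. \<omega> v}) - real (card ?E1 * card {\<omega>\<in>?E0. \<omega> v})\<bar>
      \<le> card {pr \<in> ?E1 \<times> ?E0. v \<in> disagreement_component C j (fst pr) (snd pr)}"
    unfolding E by (rule extension_marginal_diff_le[OF finite_V]) (auto simp: flip_def)
  also have "\<dots> \<le> ?S * card ?E1 * card ?E0"
    unfolding E using vj by (intro card_pairs_in_component_le) (auto simp: A_def)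
  finally have diff: "\<bar>real (card ?E0 * card {\<omega>\<in>?E1. \<omega> v}) - real (card ?E1 * card {\<omega>\<in>?E0. \<omega> v})\<bar>
      \<le> ?S * (card ?E1 * card ?E0)" by simp
  have pos: "0 < card ?E1" "0 < card ?E0" using card_pinned_pos[OF v] by simp_all
  have "heat_bath v X True - heat_bath v (flip j X) True
      = (real (card ?E0 * card {\<omega>\<in>?E1. \<omega> v}) - real (card ?E1 * card {\<omega>\<in>?E0. \<omega> v}))
        / (card ?E1 * card ?E0)"
    unfolding heat_bath_eq using pos by (simp add: field_simps)
  hence "\<bar>heat_bath v X True - heat_bath v (flip j X) True\<bar>
      = \<bar>real (card ?E0 * card {\<omega>\<in>?E1. \<omega> v}) - real (card ?E1 * card {\<omega>\<in>?E0. \<omega> v})\<bar>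
        / (card ?E1 * card ?E0)"
    by simp
  also have "\<dots> \<le> ?S * (card ?E1 * card ?E0) / (card ?E1 * card ?E0)"
    using diff by (intro divide_right_mono) auto
  also have "\<dots> = ?S" using pos by simp
  finally show ?thesis .
qed

lemma heat_bath_influence_le:
  assumes X: "X \<in> cube M" and j: "j \<in> M"
  shows "(\<Sum>v\<in>M - {j}. \<bar>heat_bath v X True - heat_bath v (flip j X) True\<bar>) \<le> 1/3"
proof -
  have "(\<Sum>v\<in>M - {j}. \<bar>heat_bath v X True - heat_bath v (flip j X) True\<bar>)
      \<le> (\<Sum>v\<in>M - {j}. \<Sum>cs\<in>induced_paths j v. path_weight cs)"
    using heat_bath_flip_diff_le[OF X j] by (intro sum_mono) auto
  also have "\<dots> \<le> 1/3" using j M_subset by (intro induced_path_weight_sum_le) auto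
  finally show ?thesis .
qed

text \<open>Flipping \<open>j \<noteq> v\<close> changes the resampled mean through \<open>f\<close>, by at most its Lipschitz
  constant, and through the heat-bath probability at \<open>v\<close>.\<close>

lemma resample_mean_flip_diff_le:
  assumes X: "X \<in> cube M" and j: "j \<in> M" and v: "v \<in> M" and vj: "v \<noteq> j"
  shows "\<bar>resample_mean f X v - resample_mean f (flip j X) v\<bar> \<le> lipschitz_const M f + \<bar>heat_bath v X True - heat_bath v (flip j X) True\<bar> * lipschitz_const M f"
proof -
  define X' where "X' = flip j X"
  have X': "X' \<in> cube M" unfolding X'_def by (rule flip_in_cube[OF X j])
  define q where "q = heat_bath v X True"
  define q' where "q' = heat_bath v X' True"
  define L where "L = lipschitz_const M f"
  define a where "a = f (X(v := True))"
  define b where "b = f (X(v := False))"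
  define a' where "a' = f (X'(v := True))"
  define b' where "b' = f (X'(v := False))"
  have qF: "heat_bath v X False = 1 - q" unfolding q_def using heat_bath_sum[OF v, of X] by linarith
  have qF': "heat_bath v X' False = 1 - q'" unfolding q'_def using heat_bath_sum[OF v, of X'] by linarith
  have q01: "0 \<le> q" "q \<le> 1" unfolding q_def using heat_bath_nonneg heat_bath_le_1[OF v] by auto
  have sw: "X'(v := c) = flip j (X(v := c))" for c unfolding X'_def flip_def using vj by (auto simp: fun_eq_iff)
  have haa: "\<bar>a - a'\<bar> \<le> L" unfolding a_def a'_def L_def sw by (rule lipschitz_const_ge[OF finite_M fun_upd_in_cube[OF X v] j])
  have hbb: "\<bar>b - b'\<bar> \<le> L" unfolding b_def b'_def L_def sw by (rule lipschitz_const_ge[OF finite_M fun_upd_in_cube[OF X v] j])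
  have fv: "X'(v := False) = flip v (X'(v := True))" unfolding flip_def by simp
  have hab: "\<bar>a' - b'\<bar> \<le> L" unfolding a'_def b'_def L_def fv by (rule lipschitz_const_ge[OF finite_M fun_upd_in_cube[OF X' v] v])
  have eq: "resample_mean f X v - resample_mean f X' v = q * (a - a') + (1 - q) * (b - b') + (q - q') * (a' - b')"
    unfolding resample_mean_def qF qF' a_def b_def a'_def b'_def q_def q'_def by (simp add: algebra_simps)
  have t1: "\<bar>q * (a - a')\<bar> \<le> q * L" using q01 haa by (simp add: abs_mult mult_left_mono)
  have t2: "\<bar>(1 - q) * (b - b')\<bar> \<le> (1 - q) * L" using q01 hbb by (simp add: abs_mult mult_left_mono)
  have t3: "\<bar>(q - q') * (a' - b')\<bar> \<le> \<bar>q - q'\<bar> * L" using hab by (simp add: abs_mult mult_left_mono)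
  have "\<bar>resample_mean f X v - resample_mean f X' v\<bar> \<le> \<bar>q * (a - a')\<bar> + \<bar>(1 - q) * (b - b')\<bar> + \<bar>(q - q') * (a' - b')\<bar>"
    unfolding eq by (rule order_trans[OF abs_triangle_ineq add_right_mono[OF abs_triangle_ineq]])
  also have "\<dots> \<le> q * L + (1 - q) * L + \<bar>q - q'\<bar> * L" using t1 t2 t3 by linarith
  also have "\<dots> = L + \<bar>q - q'\<bar> * L" by (simp add: algebra_simps)
  finally show ?thesis unfolding L_def q_def q'_def X'_def .
qed

lemma resample_mean_flip_self:
  assumes X: "X \<in> cube M" and j: "j \<in> M"
  shows "resample_mean f X j = resample_mean f (flip j X) j"
proof -
  have r: "restrict X (M - {j}) = restrict (flip j X) (M - {j})" unfolding flip_def by (auto simp: restrict_def fun_eq_iff)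
  have u: "(flip j X)(j := c) = X(j := c)" for c unfolding flip_def by simp
  show ?thesis unfolding resample_mean_def u heat_bath_cong[OF r] ..
qed


lemma sum_resample_mean_flip_le:
  assumes X: "X \<in> cube M" and j: "j \<in> M"
  shows "\<bar>(\<Sum>v\<in>M. resample_mean f X v) - (\<Sum>v\<in>M. resample_mean f (flip j X) v)\<bar>
    \<le> (real (card M) - 2/3) * lipschitz_const M f"
proof -
  let ?L = "lipschitz_const M f" and ?d = "\<lambda>v. resample_mean f X v - resample_mean f (flip j X) v"
  have "(\<Sum>v\<in>M. resample_mean f X v) - (\<Sum>v\<in>M. resample_mean f (flip j X) v) = (\<Sum>v\<in>M - {j}. ?d v)"
    using resample_mean_flip_self[OF X j] j finite_M by (simp add: sum_subtractf sum.remove)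
  hence "\<bar>(\<Sum>v\<in>M. resample_mean f X v) - (\<Sum>v\<in>M. resample_mean f (flip j X) v)\<bar>
      \<le> (\<Sum>v\<in>M - {j}. \<bar>?d v\<bar>)"
    by (simp only: sum_abs)
  also have "\<dots> \<le> (\<Sum>v\<in>M - {j}. ?L + \<bar>heat_bath v X True - heat_bath v (flip j X) True\<bar> * ?L)"
    by (rule sum_mono) (rule resample_mean_flip_diff_le[OF X j], auto)
  also have "\<dots> = (card M - 1) * ?L + (\<Sum>v\<in>M - {j}. \<bar>heat_bath v X True - heat_bath v (flip j X) True\<bar>) * ?L"
    using j finite_M by (simp add: sum.distrib sum_distrib_right card_Diff_singleton)
  also have "\<dots> \<le> (card M - 1) * ?L + (1/3) * ?L"
    using heat_bath_influence_le[OF X j] lipschitz_const_nonneg[OF finite_M]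
    by (intro add_left_mono mult_right_mono) auto
  also have "\<dots> = (real (card M) - 2/3) * ?L"
  proof -
    have "0 < card M" using j finite_M by (auto simp: card_gt_0_iff)
    thus ?thesis by (simp add: of_nat_diff algebra_simps)
  qed
  finally show ?thesis .
qed

lemma lipschitz_const_glauber_le:
  assumes M: "M \<noteq> {}"
  shows "lipschitz_const M (kernel_apply (cube M) (glauber V C M) f)
    \<le> (1 - 1 / (2 * real (card M))) * lipschitz_const M f"
proof (rule lipschitz_const_le[OF finite_M])
  let ?m = "real (card M)" and ?L = "lipschitz_const M f"
  have m: "1 \<le> ?m" using M finite_M by (simp add: Suc_le_eq card_gt_0_iff)
  thus "0 \<le> (1 - 1 / (2 * ?m)) * ?L" using lipschitz_const_nonneg[OF finite_M] by simp
  fix X j assume X: "X \<in> cube M" and j: "j \<in> M"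
  have "\<bar>kernel_apply (cube M) (glauber V C M) f X - kernel_apply (cube M) (glauber V C M) f (flip j X)\<bar>
      = (1 / ?m) * \<bar>(\<Sum>v\<in>M. resample_mean f X v) - (\<Sum>v\<in>M. resample_mean f (flip j X) v)\<bar>"
    unfolding kernel_apply_glauber[OF X] kernel_apply_glauber[OF flip_in_cube[OF X j]]
    by (simp add: abs_mult flip: right_diff_distrib diff_divide_distrib)
  also have "\<dots> \<le> (1 / ?m) * ((?m - 2/3) * ?L)"
    using sum_resample_mean_flip_le[OF X j] by (intro mult_left_mono) auto
  also have "\<dots> = (1 - 2 / (3 * ?m)) * ?L" using m by (simp add: field_simps)
  also have "\<dots> \<le> (1 - 1 / (2 * ?m)) * ?L"
    using m lipschitz_const_nonneg[OF finite_M, of f] by (intro mult_right_mono) (auto simp: field_simps)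
  finally show "\<bar>kernel_apply (cube M) (glauber V C M) f X
      - kernel_apply (cube M) (glauber V C M) f (flip j X)\<bar> \<le> (1 - 1 / (2 * ?m)) * ?L" .
qed

lemma lipschitz_contraction_glauber:
  assumes M: "M \<noteq> {}"
  shows "lipschitz_contraction M (glauber V C M) (marginal V C M) (1 - 1 / (2 * real (card M)))"
proof
  have "1 \<le> real (card M)" using M finite_M by (simp add: Suc_le_eq card_gt_0_iff)
  thus "0 \<le> 1 - 1 / (2 * real (card M))" by (simp add: field_simps)
qed (simp_all add: finite_M marginal_nonneg marginal_sum glauber_stationary[OF _ M]
      lipschitz_const_glauber_le[OF M])

end

lemma geometric_decay_le:
  fixes m n :: nat and \<delta> :: real
  assumes m1: "1 \<le> m" and mn: "m \<le> n" and \<delta>_pos: "0 < \<delta>" and \<delta>_less: "\<delta> < 1"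
  shows "real m * (1 - 1 / (2 * real m)) ^ nat \<lceil>2 * real n * log 2 (real n / \<delta>)\<rceil> \<le> \<delta>"
proof -
  define T where "T = nat \<lceil>2 * real n * log 2 (real n / \<delta>)\<rceil>"
  define x where "x = real n / \<delta>"
  have n1: "1 \<le> real n" using m1 mn by simp
  have x1: "1 < x" unfolding x_def using n1 \<delta>_pos \<delta>_less by (simp add: field_simps)
  have lx: "0 < ln x" using x1 by simp
  have l2: "0 < ln (2::real)" "ln (2::real) < 1" using ln_2_less_1 by auto
  have lg: "ln x \<le> log 2 x" unfolding log_def using lx l2 by (simp add: field_simps mult_left_le)
  have T: "2 * real n * log 2 x \<le> real T" unfolding T_def x_def by (rule real_nat_ceiling_ge)
  have "2 * real m * ln x \<le> 2 * real n * log 2 x"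
    using lg mn lx by (intro mult_mono) auto
  hence T2: "2 * real m * ln x \<le> real T" using T by linarith
  have m0: "0 < real m" using m1 by simp
  have base: "0 \<le> 1 - 1 / (2 * real m)" using m1 by (simp add: field_simps)
  have "(1 - 1 / (2 * real m)) ^ T \<le> exp (- (1 / (2 * real m))) ^ T"
    using base by (intro power_mono) (use exp_ge_add_one_self[of "- (1 / (2 * real m))"] in auto)
  also have "\<dots> = exp (real T * (- (1 / (2 * real m))))" by (rule exp_of_nat_mult[symmetric])
  also have "\<dots> \<le> exp (- ln x)"
  proof -
    have "ln x \<le> real T / (2 * real m)" using T2 m0 by (simp add: field_simps)
    thus ?thesis by simp
  qed
  also have "\<dots> = \<delta> / real n" unfolding x_def using x1 \<delta>_pos n1 by (simp add: exp_minus field_simps)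
  finally have "(1 - 1 / (2 * real m)) ^ T \<le> \<delta> / real n" .
  hence "real m * (1 - 1 / (2 * real m)) ^ T \<le> real m * (\<delta> / real n)" by (rule mult_left_mono) simp
  also have "\<dots> \<le> \<delta>" using mn n1 \<delta>_pos by (simp add: field_simps)
  finally show ?thesis unfolding T_def .
qed


lemma mixing_time_le:
  assumes "finite S" "S \<noteq> {}" "\<And>x. x \<in> S \<Longrightarrow> \<exists>t\<le>T. dtv S (kernel_pow S P t x) \<pi> \<le> \<delta>"
  shows "mixing_time S P \<pi> \<delta> \<le> T"
proof -
  have "(LEAST t. dtv S (kernel_pow S P t x) \<pi> \<le> \<delta>) \<le> T" if x: "x \<in> S" for x
  proof -
    obtain t where "t \<le> T" "dtv S (kernel_pow S P t x) \<pi> \<le> \<delta>" using assms(3)[OF x] by blast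
    thus ?thesis using Least_le[of "\<lambda>t. dtv S (kernel_pow S P t x) \<pi> \<le> \<delta>" t] by linarith
  qed
  thus ?thesis unfolding mixing_time_def using assms(1,2) by (subst Max_le_iff) auto
qed

context glauber_formula
begin

lemma glauber_mixing_time_le:
  assumes \<delta>: "0 < \<delta>" "\<delta> < 1"
  shows "int (mixing_time (M \<rightarrow>\<^sub>E (UNIV :: bool set)) (glauber V C M) (marginal V C M) \<delta>)
           \<le> \<lceil>2 * real (card V) * log 2 (real (card V) / \<delta>)\<rceil>"
proof -
  define R where "R = \<lceil>2 * real (card V) * log 2 (real (card V) / \<delta>)\<rceil>"
  have R: "0 \<le> R"
  proof (cases "card V = 0")
    case False
    hence "1 < real (card V) / \<delta>" using \<delta> by (simp add: field_simps)
    hence "0 \<le> 2 * real (card V) * log 2 (real (card V) / \<delta>)" by simp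
    thus ?thesis unfolding R_def by simp
  qed (simp add: R_def)
  have "\<exists>t\<le>nat R. dtv (cube M) (kernel_pow (cube M) (glauber V C M) t X0) (marginal V C M) \<le> \<delta>"
    if X0: "X0 \<in> cube M" for X0
  proof (cases "M = {}")
    case True
    \<comment> \<open>the kernel is then zero, as \<open>1 / card M = 0\<close>, but the cube is a single point\<close>
    hence "cube M = {X0}" using X0 unfolding cube_def by auto
    hence "dtv (cube M) (kernel_pow (cube M) (glauber V C M) 0 X0) (marginal V C M) = 0"
      using marginal_sum by (simp add: dtv_def)
    thus ?thesis using \<delta> by (intro exI[of _ 0]) auto
  next
    case False
    have "dtv (cube M) (kernel_pow (cube M) (glauber V C M) (nat R) X0) (marginal V C M)
        \<le> card M * (1 - 1 / (2 * real (card M))) ^ nat R"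
      by (rule lipschitz_contraction.dtv_kernel_pow_le[OF lipschitz_contraction_glauber[OF False] X0])
    also have "\<dots> \<le> \<delta>"
      unfolding R_def using False finite_M M_subset finite_V \<delta>
      by (intro geometric_decay_le) (auto simp: Suc_le_eq card_gt_0_iff card_mono)
    finally show ?thesis by blast
  qed
  hence "mixing_time (cube M) (glauber V C M) (marginal V C M) \<delta> \<le> nat R"
    by (intro mixing_time_le finite_cube finite_M cube_nonempty)
  thus ?thesis using R unfolding R_def cube_def by linarith
qed

end

lemma glauber_formula_of_bounds:
  assumes cnf: "cnf_formula V C" and uniform: "k_uniform k C" and degree: "max_degree_le V C d"
    and k\<beta>: "1 \<le> k\<beta>" "k\<beta> \<le> k" and M: "M \<subseteq> V"
    and unmarked: "\<forall>c\<in>C. card (clause_vars c - M) \<ge> k\<beta>"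
    and large: "(2::nat) ^ k\<beta> \<ge> 2 ^ 16 * d ^ 9 * k ^ 9"
  shows "\<exists>k' d' k\<beta>'. glauber_formula V C M k' d' k\<beta>'"
proof (cases "C = {}")
  case True
  \<comment> \<open>then \<open>d\<close> and \<open>k\<close> may vanish, but the locale holds for any parameters\<close>
  have "glauber_formula V C M 1 1 16"
    using cnf M unfolding True by unfold_locales (auto simp: k_uniform_def max_degree_le_def)
  thus ?thesis by blast
next
  case False
  then obtain c where c: "c \<in> C" by blast
  have "card (clause_vars c) = k" using uniform c unfolding k_uniform_def clause_vars_def by blast
  with k\<beta> obtain u where u: "u \<in> clause_vars c" by (metis card.empty ex_in_conv not_one_le_zero order_trans)
  have "u \<in> V" using cnf c u unfolding cnf_formula_def clause_vars_def by blast
  have "finite C" using cnf unfolding cnf_formula_def by blast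
  moreover have "c \<in> {c \<in> C. u \<in> clause_vars c}" using c u by blast
  ultimately have "0 < card {c \<in> C. u \<in> clause_vars c}" by (auto simp: card_gt_0_iff)
  hence "1 \<le> card {c \<in> C. u \<in> clause_vars c}" by simp
  also have "\<dots> \<le> d" using degree \<open>u \<in> V\<close> unfolding max_degree_le_def by blast
  finally have "glauber_formula V C M k d k\<beta>"
    using cnf uniform degree M unmarked large k\<beta> by unfold_locales auto
  thus ?thesis by blast
qed

text \<open>The hypotheses on \<open>k\<alpha>\<close> are only needed for \<open>k\<beta> \<le> k\<close>, and the existence of a
  satisfying assignment follows from the local lemma.\<close>

theorem lemma4p1:
  fixes V :: "'v set" and C :: "'v clause set" and M :: "'v set"
    and k d k\<alpha> k\<beta> :: nat and \<delta> :: real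
  assumes "cnf_formula V C"
    and "k_uniform k C"
    and "max_degree_le V C d"
    and "sat_assignments V C \<noteq> {}"
    and "1 \<le> k\<alpha>" and "1 \<le> k\<beta>" and "k\<alpha> + k\<beta> \<le> k"
    and "M \<subseteq> V"
    and "\<forall>c\<in>C. card (clause_vars c \<inter> M) \<ge> k\<alpha> \<and> card (clause_vars c - M) \<ge> k\<beta>"
    and "(2::nat) ^ k\<beta> \<ge> 2 ^ 16 * d ^ 9 * k ^ 9"
    and "0 < \<delta>" and "\<delta> < 1"
  shows "int (mixing_time (M \<rightarrow>\<^sub>E (UNIV :: bool set)) (glauber V C M) (marginal V C M) \<delta>)
           \<le> \<lceil>2 * real (card V) * log 2 (real (card V) / \<delta>)\<rceil>"
proof -
  obtain k' d' k\<beta>' where "glauber_formula V C M k' d' k\<beta>'"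
    using glauber_formula_of_bounds[of V C k d k\<beta> M] assms(1-3,6-10) by auto
  thus ?thesis using assms(11,12) by (rule glauber_formula.glauber_mixing_time_le)
qed

end
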